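(* Under the standing assumptions (A) below, the set $\Omega'=\{t\in[0,L]:\tau(t)\ne\pm\lambda\}\cup\Omega$ has finitely many connected components.
   Context: Standing assumptions (A): $n\ge2$, $L>0$, $\beta\colon[0,L]\to(0,\infty)$ of bounded variation with $1/\beta$ bounded; $\tau\in W^{1,\infty}((0,L);S^{n-1})$ with $k=\operatorname{ess\,sup}|\tau'|>0$; $\lambda\in S^{n-1}$ and $u\in W^{1,\infty}((0,L);\mathbb{R}^n)\setminus\{0\}$ such that $u'+(u\cdot\tau')\tau=\beta(\lambda-(\lambda\cdot\tau)\tau)$ and $|u|\tau'=ku$ a.e. in $(0,L)$; $f=k|u|$, which then satisfies $f'=\beta\,\lambda\cdot\tau'$ and $f(\tau''+k^2\tau)=\beta k^2\,\mathrm{proj}^\perp_{\tau,\tau'}(\lambda)$ weakly in $(0,L)$ (where $\mathrm{proj}^\perp_{V,W}$ is the orthogonal projection onto the orthogonal complement of $\mathrm{span}\{V,W\}$); $\Omega=\{t\in[0,L]:f(t)>0\}$ (open relative to $[0,L]$); and $\tau(t),\tau'(t),\lambda$ are linearly dependent for every $t\in\Omega$ (note $\tau'$ is continuous on $\Omega$). *)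

theory Defs
  imports "HOL-Analysis.Analysis" "HOL-Probability.Essential_Supremum"
begin

definition bounded_variation_on :: "(real \<Rightarrow> real) \<Rightarrow> real \<Rightarrow> real \<Rightarrow> bool" where
  "bounded_variation_on g a b \<longleftrightarrow>
     (\<exists>V. \<forall>xs. sorted xs \<and> set xs \<subseteq> {a..b} \<longrightarrow>
        (\<Sum>i<length xs - 1. \<bar>g (xs ! Suc i) - g (xs ! i)\<bar>) \<le> V)"

text \<open>Linear dependence of the three-element family (x, y, z) (as a family,
  so repetitions count as dependence).\<close>
definition lin_dep3 :: "'a::real_vector \<Rightarrow> 'a \<Rightarrow> 'a \<Rightarrow> bool" where
  "lin_dep3 x y z \<longleftrightarrow>
     (\<exists>a b c. (a, b, c) \<noteq> (0::real, 0::real, 0::real) \<and> a *\<^sub>R x + b *\<^sub>R y + c *\<^sub>R z = 0)"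

end

theory Submission
  imports Defs
begin

text \<open>Put \<open>g = \<lambda> \<bullet> \<tau>\<close> and \<open>f = k \<bar>u\<bar>\<close>. The complement of \<open>\<Omega>'\<close> in \<open>[0, L]\<close> is the closed set \<open>Z\<close>
  where \<open>\<bar>g\<bar> = 1\<close> and \<open>f = 0\<close>, and almost everywhere \<open>f' = \<beta> g'\<close> and \<open>g'\<^sup>2 = k\<^sup>2 (1 - g\<^sup>2)\<close>.
  Every component of \<open>[0, L] - Z\<close> away from the end points is a gap \<open>(a, b)\<close> of \<open>Z\<close>.
  If \<open>g\<close> had a one-sided local maximum at a zero \<open>c\<close> of \<open>f\<close>, then, summing \<open>f' = \<beta> g'\<close> by parts
  against the small variation of \<open>\<beta>\<close> near \<open>c\<close>, \<open>f \<ge> 0\<close> would force \<open>g\<close> to be constant near \<open>c\<close>,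
  hence \<open>\<bar>g\<bar> = 1\<close> and \<open>f = 0\<close> there, i.e. a piece of \<open>Z\<close>. Inside a gap this rules out
  \<open>g(a) = 1\<close> and forces the maximum of \<open>g\<close> on \<open>[a, b]\<close> to be \<open>1\<close>, since at points with \<open>f > 0\<close> and
  \<open>\<bar>g\<bar> < 1\<close> the function \<open>g\<close> is strictly monotone. So \<open>g\<close> runs from \<open>-1\<close> to \<open>1\<close> in every gap,
  and the Lipschitz bound on \<open>g\<close> gives every gap a uniform minimal length.\<close>

section \<open>Lipschitz functions with almost-everywhere derivatives\<close>

lemma AE_lborel_negligible_exception:
  assumes "AE t in lborel. P t"
  obtains N where "negligible N" and "\<And>t. t \<notin> N \<Longrightarrow> P t"
proof -
  obtain N where N: "{t \<in> space lborel. \<not> P t} \<subseteq> N" "N \<in> null_sets lborel"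
    using assms unfolding eventually_ae_filter by blast
  show thesis
  proof (rule that)
    show "negligible N" using N(2) negligible_iff_null_sets null_sets_completionI by blast
    show "P t" if "t \<notin> N" for t using N(1) that by auto
  qed
qed

lemma AE_lborel_interval_ex:
  assumes "AE t in lborel. t \<in> {a<..<b} \<longrightarrow> P t" and "a < (b::real)"
  shows "\<exists>t\<in>{a<..<b}. P t"
proof -
  obtain N where "negligible N" and P: "\<And>t. t \<notin> N \<Longrightarrow> t \<in> {a<..<b} \<longrightarrow> P t"
    using AE_lborel_negligible_exception[OF assms(1)] by blast
  have "\<not> negligible {a<..<b}" using negligible_interval(2)[of a b] assms(2) by (simp add: box_real)
  then have "\<not> {a<..<b} \<subseteq> N" using \<open>negligible N\<close> negligible_subset by blast
  then obtain t where "t \<in> {a<..<b}" "t \<notin> N" by blast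
  then show ?thesis using P by blast
qed

lemma AE_lborel_interval_subset:
  assumes "AE t in lborel. t \<in> S \<longrightarrow> P t" and "T \<subseteq> S"
  shows "AE t in lborel. t \<in> T \<longrightarrow> P t"
  using assms(1) by (rule eventually_mono) (use assms(2) in blast)

lemma negligible_lipschitz_image:
  fixes f :: "'a::euclidean_space \<Rightarrow> 'b::euclidean_space"
  assumes "DIM('a) \<le> DIM('b)" and "C-lipschitz_on T f" and "S \<subseteq> T" and "negligible S"
  shows "negligible (f ` S)"
proof (rule negligible_locally_Lipschitz_image[OF assms(1,4)])
  fix x assume "x \<in> S"
  then have "\<forall>y\<in>S \<inter> UNIV. norm (f y - f x) \<le> C * norm (y - x)"
    using lipschitz_onD[OF assms(2)] assms(3) by (auto simp: dist_norm)
  then show "\<exists>U B. open U \<and> x \<in> U \<and> (\<forall>y\<in>S \<inter> U. norm (f y - f x) \<le> B * norm (y - x))"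
    by blast
qed

lemma last_crossing:
  fixes H :: "real \<Rightarrow> real"
  assumes "a \<le> b" and cont: "continuous_on {a..b} H" and "H b < y" and "y \<le> H a"
  shows "\<exists>x\<in>{a..<b}. H x = y \<and> (\<forall>t\<in>{x<..b}. H t < y)"
proof -
  define A where "A = {a..b} \<inter> H -` {y..}"
  have "closed A"
    unfolding A_def by (rule continuous_closed_preimage[OF cont]) auto
  moreover have "a \<in> A" and "bdd_above A"
    using assms unfolding A_def by (auto intro: bdd_aboveI[of _ b])
  ultimately have xA: "Sup A \<in> A" using closed_contains_Sup by blast
  have right: "H t < y" if "t \<in> {Sup A<..b}" for t
    using that cSup_upper[of t A] \<open>bdd_above A\<close> xA unfolding A_def by fastforce
  have "Sup A \<noteq> b" using xA assms(3) unfolding A_def by auto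
  with xA have x: "Sup A \<in> {a..<b}" unfolding A_def by auto
  obtain z where z: "z \<in> {Sup A..b}" "H z = y"
    using IVT2'[of H b y "Sup A"] assms(3) xA x continuous_on_subset[OF cont]
    unfolding A_def by fastforce
  with right[of z] have "z = Sup A" by (cases "z = Sup A") auto
  with x z right show ?thesis by blast
qed

text \<open>A perturbation \<open>h t + e t\<close> turns a decrease of \<open>h\<close> into a level \<open>y\<close> that is crossed
  downwards for the last time at a point of differentiability; there the perturbed derivative
  is positive, which is impossible. Such a level exists because the Lipschitz image of the
  exceptional null set is null.\<close>
lemma lipschitz_deriv_nonneg_ae_imp_mono:
  fixes h :: "real \<Rightarrow> real"
  assumes ab: "a \<le> b" and lip: "C-lipschitz_on {a..b} h"
    and der: "AE t in lborel. t \<in> {a<..<b} \<longrightarrow> (\<exists>d\<ge>0. (h has_real_derivative d) (at t))"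
  shows "h a \<le> h b"
proof (rule ccontr)
  assume "\<not> h a \<le> h b"
  then have dec: "h b < h a" by simp
  with ab have "a < b" by (cases "a = b") auto
  define e where "e = (h a - h b) / (2 * (b - a))"
  have e: "e > 0" using dec \<open>a < b\<close> by (simp add: e_def)
  define H where "H t = h t + e * t" for t
  have "e * (b - a) = (h a - h b) / 2" using \<open>a < b\<close> by (simp add: e_def field_simps)
  then have Hba: "H b < H a" using dec by (simp add: H_def algebra_simps)
  have lipH: "(C + \<bar>e\<bar> * 1)-lipschitz_on {a..b} H"
    unfolding H_def by (rule lipschitz_on_add[OF lip lipschitz_on_cmult_real[OF lipschitz_on_id]])
  obtain N where "negligible N"
    and N: "\<And>t. t \<notin> N \<Longrightarrow> t \<in> {a<..<b} \<longrightarrow> (\<exists>d\<ge>0. (h has_real_derivative d) (at t))"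
    using AE_lborel_negligible_exception[OF der] by blast
  define S where "S = ({a..b} \<inter> N) \<union> {a, b}"
  have "negligible ({a..b} \<inter> N)" using \<open>negligible N\<close> by (rule negligible_subset) auto
  then have "negligible S" unfolding S_def by (simp add: negligible_Un)
  then have "negligible (H ` S)"
    by (rule negligible_lipschitz_image[OF order_refl lipH, rotated]) (use ab in \<open>auto simp: S_def\<close>)
  moreover have "\<not> negligible {H b<..<H a}"
    using Hba negligible_interval(2)[of "H b" "H a"] by (simp add: box_real)
  ultimately obtain y where y: "y \<in> {H b<..<H a}" "y \<notin> H ` S"
    by (meson negligible_subset subsetI)
  have contH: "continuous_on {a..b} H" using lipH by (rule lipschitz_on_continuous_on)
  obtain x where x: "x \<in> {a..<b}" "H x = y" and right: "\<forall>t\<in>{x<..b}. H t < y"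
    using last_crossing[OF ab contH, of y] y by auto
  then have "x \<notin> S" using y by auto
  then have "x \<in> {a<..<b}" "x \<notin> N" using x unfolding S_def by auto
  then obtain d where d: "d \<ge> 0" "(h has_real_derivative d) (at x)" using N by blast
  then have "(H has_real_derivative d + e) (at x)"
    unfolding H_def by (auto intro!: derivative_eq_intros)
  then obtain \<delta> where \<delta>: "\<delta> > 0" "\<And>\<eta>. 0 < \<eta> \<Longrightarrow> \<eta> < \<delta> \<Longrightarrow> H x < H (x + \<eta>)"
    using DERIV_pos_inc_right d e by (metis add_nonneg_pos)
  define \<eta> where "\<eta> = min (\<delta> / 2) ((b - x) / 2)"
  have \<eta>: "0 < \<eta>" "\<eta> < \<delta>" "\<eta> \<le> (b - x) / 2"
    using \<delta> x by (auto simp: \<eta>_def min_def)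
  then have "H x < H (x + \<eta>)" using \<delta>(2) by blast
  moreover have "H (x + \<eta>) < y" using right \<eta> x by auto
  ultimately show False using x(2) by simp
qed

lemma lipschitz_deriv_zero_ae_imp_const:
  fixes h :: "real \<Rightarrow> real"
  assumes "a \<le> b" and lip: "C-lipschitz_on {a..b} h"
    and der: "AE t in lborel. t \<in> {a<..<b} \<longrightarrow> (h has_real_derivative 0) (at t)"
  shows "h b = h a"
proof -
  have "h a \<le> h b"
    by (rule lipschitz_deriv_nonneg_ae_imp_mono[OF assms(1) lip])
      (use der in \<open>auto elim!: eventually_mono\<close>)
  moreover have "- h a \<le> - h b"
  proof (rule lipschitz_deriv_nonneg_ae_imp_mono[OF assms(1)])
    show "C-lipschitz_on {a..b} (\<lambda>t. - h t)" using lip by simp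
    show "AE t in lborel. t \<in> {a<..<b} \<longrightarrow> (\<exists>d\<ge>0. ((\<lambda>t. - h t) has_real_derivative d) (at t))"
      using der by (rule eventually_mono) (metis DERIV_minus neg_0_equal_iff_equal order_refl)
  qed
  ultimately show ?thesis by simp
qed

lemma lipschitz_deriv_ge_ae_imp_increment_ge:
  fixes g :: "real \<Rightarrow> real"
  assumes "a \<le> b" and lip: "C-lipschitz_on {a..b} g"
    and der: "AE t in lborel. t \<in> {a<..<b} \<longrightarrow> (\<exists>d\<ge>c. (g has_real_derivative d) (at t))"
  shows "g a + c * (b - a) \<le> g b"
proof -
  have "(C + \<bar>c\<bar> * 1)-lipschitz_on {a..b} (\<lambda>t. g t - c * t)"
    by (rule lipschitz_on_diff[OF lip lipschitz_on_cmult_real[OF lipschitz_on_id]])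
  moreover have "AE t in lborel. t \<in> {a<..<b} \<longrightarrow> (\<exists>d\<ge>0. ((\<lambda>t. g t - c * t) has_real_derivative d) (at t))"
    using der
  proof (rule eventually_mono, intro impI)
    fix t assume "t \<in> {a<..<b} \<longrightarrow> (\<exists>d\<ge>c. (g has_real_derivative d) (at t))" "t \<in> {a<..<b}"
    then obtain d where "d \<ge> c" "(g has_real_derivative d) (at t)" by blast
    then have "((\<lambda>t. g t - c * t) has_real_derivative d - c) (at t)"
      by (auto intro!: derivative_eq_intros)
    moreover have "0 \<le> d - c" using \<open>d \<ge> c\<close> by simp
    ultimately show "\<exists>d\<ge>0. ((\<lambda>t. g t - c * t) has_real_derivative d) (at t)" by blast
  qed
  ultimately have "g a - c * a \<le> g b - c * b"
    using lipschitz_deriv_nonneg_ae_imp_mono[OF assms(1)] by blast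
  then show ?thesis by (simp add: algebra_simps)
qed

lemma not_local_max_if_deriv_continuous_nonzero:
  fixes g phi :: "real \<Rightarrow> real"
  assumes lip: "C-lipschitz_on {s - d..s + d} g" and "0 < d"
    and der: "AE y in lborel. y \<in> {s - d<..<s + d} \<longrightarrow> (g has_real_derivative phi y) (at y)"
    and "isCont phi s" and "phi s \<noteq> 0"
  shows "\<exists>t\<in>{s - d..s + d}. g s < g t"
proof -
  obtain d' where "d' > 0" and d': "\<And>y. dist y s < d' \<Longrightarrow> dist (phi y) (phi s) < \<bar>phi s\<bar> / 2"
    using \<open>isCont phi s\<close> \<open>phi s \<noteq> 0\<close> unfolding continuous_at_eps_delta
    by (metis half_gt_zero zero_less_abs_iff)
  define \<rho> where "\<rho> = min d d'"
  have "0 < \<rho>" "\<rho> \<le> d" using \<open>0 < d\<close> \<open>d' > 0\<close> by (auto simp: \<rho>_def)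
  have near: "(g has_real_derivative phi y) (at y) \<and> \<bar>phi y - phi s\<bar> < \<bar>phi s\<bar> / 2"
    if "y \<in> {s - d<..<s + d} \<longrightarrow> (g has_real_derivative phi y) (at y)" "y \<in> {s - \<rho><..<s + \<rho>}" for y
    using that d'[of y] \<open>\<rho> \<le> d\<close> by (auto simp: \<rho>_def dist_real_def)
  show ?thesis
  proof (cases "phi s > 0")
    case True
    have "C-lipschitz_on {s..s + \<rho>} g" using lipschitz_on_subset[OF lip] \<open>\<rho> \<le> d\<close> \<open>0 < \<rho>\<close> by auto
    moreover have "AE t in lborel. t \<in> {s<..<s + \<rho>} \<longrightarrow> (\<exists>d\<ge>phi s / 2. (g has_real_derivative d) (at t))"
      using der
    proof (rule eventually_mono, intro impI)
      fix t assume "t \<in> {s - d<..<s + d} \<longrightarrow> (g has_real_derivative phi t) (at t)" "t \<in> {s<..<s + \<rho>}"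
      then have "(g has_real_derivative phi t) (at t)" and close: "\<bar>phi t - phi s\<bar> < \<bar>phi s\<bar> / 2"
        using near[of t] \<open>0 < \<rho>\<close> by auto
      moreover have "phi s / 2 \<le> phi t"
        using close abs_of_pos[OF True] unfolding abs_less_iff by linarith
      ultimately show "\<exists>d\<ge>phi s / 2. (g has_real_derivative d) (at t)" by blast
    qed
    ultimately have "g s + phi s / 2 * ((s + \<rho>) - s) \<le> g (s + \<rho>)"
      by (rule lipschitz_deriv_ge_ae_imp_increment_ge[rotated]) (use \<open>0 < \<rho>\<close> in simp)
    moreover have "0 < phi s / 2 * ((s + \<rho>) - s)" using True \<open>0 < \<rho>\<close> by simp
    ultimately show ?thesis using \<open>0 < \<rho>\<close> \<open>\<rho> \<le> d\<close> by (intro bexI[of _ "s + \<rho>"]) auto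
  next
    case False
    with \<open>phi s \<noteq> 0\<close> have "phi s < 0" by simp
    have "C-lipschitz_on {s - \<rho>..s} (\<lambda>t. - g t)"
      using lipschitz_on_subset[OF lip] \<open>\<rho> \<le> d\<close> \<open>0 < \<rho>\<close> by (auto intro: lipschitz_on_minus)
    moreover have "AE t in lborel. t \<in> {s - \<rho><..<s} \<longrightarrow>
        (\<exists>d\<ge>- phi s / 2. ((\<lambda>t. - g t) has_real_derivative d) (at t))"
      using der
    proof (rule eventually_mono, intro impI)
      fix t assume "t \<in> {s - d<..<s + d} \<longrightarrow> (g has_real_derivative phi t) (at t)" "t \<in> {s - \<rho><..<s}"
      then have "((\<lambda>t. - g t) has_real_derivative - phi t) (at t)"
        and close: "\<bar>phi t - phi s\<bar> < \<bar>phi s\<bar> / 2"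
        using near[of t] \<open>0 < \<rho>\<close> by (auto intro: DERIV_minus)
      moreover have "- phi s / 2 \<le> - phi t"
        using close abs_of_neg[OF \<open>phi s < 0\<close>] unfolding abs_less_iff by linarith
      ultimately show "\<exists>d\<ge>- phi s / 2. ((\<lambda>t. - g t) has_real_derivative d) (at t)" by blast
    qed
    ultimately have "- g (s - \<rho>) + - phi s / 2 * (s - (s - \<rho>)) \<le> - g s"
      by (rule lipschitz_deriv_ge_ae_imp_increment_ge[rotated]) (use \<open>0 < \<rho>\<close> in simp)
    moreover have "0 < - phi s / 2 * (s - (s - \<rho>))" using \<open>phi s < 0\<close> \<open>0 < \<rho>\<close> by (simp add: mult_neg_pos)
    ultimately show ?thesis using \<open>0 < \<rho>\<close> \<open>\<rho> \<le> d\<close> by (intro bexI[of _ "s - \<rho>"]) auto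
  qed
qed

lemma deriv_zero_of_locally_const:
  fixes f :: "real \<Rightarrow> real"
  assumes "(f has_real_derivative D) (at t)" and t: "t \<in> {p<..<q}" and const: "\<forall>y\<in>{p..q}. f y = c"
  shows "D = 0"
proof (rule DERIV_local_max[OF assms(1)])
  show "0 < min (t - p) (q - t)" using t by simp
  show "\<forall>y. \<bar>t - y\<bar> < min (t - p) (q - t) \<longrightarrow> f y \<le> f t"
  proof (intro allI impI)
    fix y assume "\<bar>t - y\<bar> < min (t - p) (q - t)"
    then have "y \<in> {p..q}" "t \<in> {p..q}" using t by auto
    then have "f y = c" "f t = c" using const by auto
    then show "f y \<le> f t" by simp
  qed
qed

lemma isCont_zero_if_zeros_accumulate:
  fixes h :: "real \<Rightarrow> real"
  assumes "isCont h s" and zeros: "\<And>r. r > 0 \<Longrightarrow> \<exists>y. \<bar>y - s\<bar> < r \<and> h y = 0"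
  shows "h s = 0"
proof (rule ccontr)
  assume "h s \<noteq> 0"
  then obtain r where "r > 0" "\<And>y. dist s y < r \<Longrightarrow> h y \<noteq> 0"
    using continuous_at_avoid[OF assms(1)] by blast
  with zeros[OF \<open>r > 0\<close>] show False by (auto simp: dist_real_def abs_minus_commute)
qed

section \<open>Functions of bounded variation\<close>

fun list_variation :: "(real \<Rightarrow> real) \<Rightarrow> real list \<Rightarrow> real" where
  "list_variation g (x # y # zs) = \<bar>g y - g x\<bar> + list_variation g (y # zs)"
| "list_variation g _ = 0"

lemma list_variation_eq_sum:
  "list_variation g xs = (\<Sum>i<length xs - 1. \<bar>g (xs ! Suc i) - g (xs ! i)\<bar>)"
proof (induction g xs rule: list_variation.induct)
  case (1 g x y zs)
  have "(\<Sum>i<length (x # y # zs) - 1. \<bar>g ((x # y # zs) ! Suc i) - g ((x # y # zs) ! i)\<bar>)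
      = \<bar>g y - g x\<bar> + (\<Sum>i<length zs. \<bar>g ((y # zs) ! Suc i) - g ((y # zs) ! i)\<bar>)"
    by (simp add: sum.lessThan_Suc_shift del: sum.lessThan_Suc)
  with 1 show ?case by simp
qed auto

lemma list_variation_append: "list_variation g xs + list_variation g ys \<le> list_variation g (xs @ ys)"
proof (induction g xs rule: list_variation.induct)
  case ("2_2" g v)
  then show ?case by (cases ys) auto
qed auto

definition variation_le :: "(real \<Rightarrow> real) \<Rightarrow> real set \<Rightarrow> real \<Rightarrow> bool" where
  "variation_le g S V \<longleftrightarrow> (\<forall>xs. sorted xs \<and> set xs \<subseteq> S \<longrightarrow> list_variation g xs \<le> V)"

lemma bounded_variation_on_iff_variation_le:
  "bounded_variation_on g a b \<longleftrightarrow> (\<exists>V. variation_le g {a..b} V)"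
  by (simp add: bounded_variation_on_def variation_le_def list_variation_eq_sum)

lemma variation_le_subset: "variation_le g S V \<Longrightarrow> T \<subseteq> S \<Longrightarrow> variation_le g T V"
  unfolding variation_le_def by blast

lemma variation_le_nonneg: "variation_le g S V \<Longrightarrow> 0 \<le> V"
  unfolding variation_le_def by (metis empty_set empty_subsetI list_variation.simps(2) sorted0)

lemma variation_le_dist:
  assumes "variation_le g S V" and "x \<in> S" and "y \<in> S"
  shows "\<bar>g x - g y\<bar> \<le> V"
proof -
  have "sorted [min x y, max x y]" "set [min x y, max x y] \<subseteq> S"
    using assms(2,3) by (auto simp: min_def max_def)
  then have "list_variation g [min x y, max x y] \<le> V"
    using assms(1) unfolding variation_le_def by blast
  then show ?thesis by (cases "x \<le> y") (auto simp: min_def max_def abs_minus_commute)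
qed

text \<open>If the variation on \<open>(c, c + \<delta>)\<close> stayed above \<open>\<eta>\<close> for all \<open>\<delta>\<close>, disjoint
  subintervals accumulating at \<open>c\<close> would carry unbounded total variation.\<close>
lemma variation_le_small_right:
  assumes var: "variation_le g {c<..<e} V" and "c < e" and "\<eta> > 0"
  shows "\<exists>\<delta>>0. variation_le g {c<..<c + \<delta>} \<eta>"
proof (rule ccontr)
  assume "\<not> ?thesis"
  then have large: "\<exists>xs. sorted xs \<and> set xs \<subseteq> {c<..<c + \<delta>} \<and> \<eta> < list_variation g xs"
    if "0 < \<delta>" for \<delta>
    using that unfolding variation_le_def by (auto simp: not_le)
  have many: "\<exists>xs. sorted xs \<and> set xs \<subseteq> {c<..<c + \<delta>} \<and> real n * \<eta> \<le> list_variation g xs"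
    if "0 < \<delta>" for n \<delta>
    using that
  proof (induction n arbitrary: \<delta>)
    case 0
    show ?case by (intro exI[of _ "[]"]) auto
  next
    case (Suc n)
    obtain xs1 where xs1: "sorted xs1" "set xs1 \<subseteq> {c<..<c + \<delta>}" "\<eta> < list_variation g xs1"
      using large Suc.prems by blast
    then have "xs1 \<noteq> []" using \<open>\<eta> > 0\<close> by auto
    define m where "m = hd xs1"
    have m: "m \<in> {c<..<c + \<delta>}" using \<open>xs1 \<noteq> []\<close> xs1(2) unfolding m_def by (cases xs1) auto
    have m_le: "m \<le> y" if "y \<in> set xs1" for y
      using xs1(1) \<open>xs1 \<noteq> []\<close> that unfolding m_def by (cases xs1) auto
    obtain xs2 where xs2: "sorted xs2" "set xs2 \<subseteq> {c<..<c + (m - c) / 2}"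
      "real n * \<eta> \<le> list_variation g xs2"
      using Suc.IH[of "(m - c) / 2"] m Suc.prems by auto
    have "x \<le> y" if "x \<in> set xs2" "y \<in> set xs1" for x y
    proof -
      have "x < c + (m - c) / 2" using xs2(2) that(1) by auto
      moreover have "c < m" using m by simp
      ultimately show ?thesis using m_le[OF that(2)] by argo
    qed
    then have "sorted (xs2 @ xs1)" using xs1(1) xs2(1) by (simp add: sorted_append)
    moreover have "c + (m - c) / 2 < c + \<delta>" using m by (simp add: field_simps)
    then have "{c<..<c + (m - c) / 2} \<subseteq> {c<..<c + \<delta>}"
      by (simp only: greaterThanLessThan_subseteq_greaterThanLessThan) simp
    then have "set (xs2 @ xs1) \<subseteq> {c<..<c + \<delta>}" using xs1(2) xs2(2) by auto
    moreover have "real (Suc n) * \<eta> \<le> list_variation g (xs2 @ xs1)"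
      using list_variation_append[of g xs2 xs1] xs1(3) xs2(3) by (simp add: algebra_simps)
    ultimately show ?case by blast
  qed
  obtain n :: nat where n: "V / \<eta> < real n" using reals_Archimedean2 by blast
  obtain xs where xs: "sorted xs" "set xs \<subseteq> {c<..<e}" "real n * \<eta> \<le> list_variation g xs"
    using many[of "e - c" n] \<open>c < e\<close> by auto
  then have "real n * \<eta> \<le> V" using var unfolding variation_le_def by (meson order_trans)
  with n \<open>\<eta> > 0\<close> show False by (simp add: field_simps)
qed

lemma list_variation_interleaved:
  fixes p q s :: "nat \<Rightarrow> real"
  assumes "\<forall>i<n. s i < p i \<and> p i \<le> q i \<and> q i < s (Suc i)" and "mono s"
  shows "sorted (concat (map (\<lambda>i. [p i, q i]) [0..<n]))
     \<and> (\<Sum>i<n. \<bar>g (q i) - g (p i)\<bar>) \<le> list_variation g (concat (map (\<lambda>i. [p i, q i]) [0..<n]))"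
  using assms(1)
proof (induction n)
  case 0
  then show ?case by simp
next
  case (Suc n)
  define xs where "xs = concat (map (\<lambda>i. [p i, q i]) [0..<n])"
  have IH: "sorted xs" "(\<Sum>i<n. \<bar>g (q i) - g (p i)\<bar>) \<le> list_variation g xs"
    using Suc unfolding xs_def by auto
  have pq: "s n < p n" "p n \<le> q n" using Suc.prems by auto
  have le_p: "x \<le> p n" if "x \<in> set xs" for x
  proof -
    obtain j where j: "j < n" "x = p j \<or> x = q j" using \<open>x \<in> set xs\<close> unfolding xs_def by auto
    moreover have "p j \<le> q j" "q j < s (Suc j)" using Suc.prems j(1) by auto
    moreover have "s (Suc j) \<le> s n" using \<open>mono s\<close> j(1) by (simp add: monoD)
    ultimately show ?thesis using pq by linarith
  qed
  have "x \<le> q n" if "x \<in> set xs" for x using le_p[OF that] pq by linarith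
  then have "sorted (xs @ [p n, q n])" using le_p IH(1) pq by (simp add: sorted_append)
  moreover have "(\<Sum>i<Suc n. \<bar>g (q i) - g (p i)\<bar>) \<le> list_variation g (xs @ [p n, q n])"
    using IH(2) list_variation_append[of g xs "[p n, q n]"] by simp
  ultimately show ?case unfolding xs_def by simp
qed

lemma oscillation_sum_le_variation:
  fixes b :: "real \<Rightarrow> real" and s m :: "nat \<Rightarrow> real"
  assumes var: "variation_le b S W" and "mono s" and "\<epsilon> > 0"
    and sub: "\<And>i. i < N \<Longrightarrow> {s i<..<s (Suc i)} \<subseteq> S"
    and m: "\<And>i. i < N \<Longrightarrow> m i \<in> {s i<..<s (Suc i)}"
  shows "\<exists>D. (\<forall>i<N. \<forall>t\<in>{s i<..<s (Suc i)}. \<bar>b t - b (m i)\<bar> \<le> D i) \<and> (\<Sum>i<N. D i) \<le> W + \<epsilon>"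
proof -
  define D where "D i = Sup ((\<lambda>t. \<bar>b t - b (m i)\<bar>) ` {s i<..<s (Suc i)})" for i
  have bdd: "bdd_above ((\<lambda>t. \<bar>b t - b (m i)\<bar>) ` {s i<..<s (Suc i)})" if i: "i < N" for i
  proof (rule bdd_aboveI2[where M=W])
    fix t assume "t \<in> {s i<..<s (Suc i)}"
    then have "t \<in> S" "m i \<in> S" using sub[OF i] m[OF i] by auto
    then show "\<bar>b t - b (m i)\<bar> \<le> W" by (rule variation_le_dist[OF var])
  qed
  have D: "\<bar>b t - b (m i)\<bar> \<le> D i" if "i < N" "t \<in> {s i<..<s (Suc i)}" for i t
    unfolding D_def using bdd[OF that(1)] that(2) by (auto intro: cSup_upper)
  have "\<exists>x. i < N \<longrightarrow> x \<in> {s i<..<s (Suc i)} \<and> D i - \<epsilon> / N < \<bar>b x - b (m i)\<bar>" for i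
  proof (cases "i < N")
    case True
    have "D i - \<epsilon> / N < D i" using \<open>\<epsilon> > 0\<close> True by simp
    moreover have "(\<lambda>t. \<bar>b t - b (m i)\<bar>) ` {s i<..<s (Suc i)} \<noteq> {}" using m[OF True] by auto
    ultimately obtain t where "t \<in> {s i<..<s (Suc i)}" "D i - \<epsilon> / N < \<bar>b t - b (m i)\<bar>"
      unfolding D_def by (blast elim: less_cSupE)
    then show ?thesis by blast
  qed simp
  then obtain x where x: "\<And>i. i < N \<Longrightarrow> x i \<in> {s i<..<s (Suc i)} \<and> D i - \<epsilon> / N < \<bar>b (x i) - b (m i)\<bar>"
    by metis
  define p where "p i = min (x i) (m i)" for i
  define q where "q i = max (x i) (m i)" for i
  have pq: "\<forall>i<N. s i < p i \<and> p i \<le> q i \<and> q i < s (Suc i)"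
    using x m unfolding p_def q_def by fastforce
  have "set (concat (map (\<lambda>i. [p i, q i]) [0..<N])) \<subseteq> S"
    using pq sub by fastforce
  with var list_variation_interleaved[OF pq \<open>mono s\<close>, of b]
  have "(\<Sum>i<N. \<bar>b (q i) - b (p i)\<bar>) \<le> W"
    unfolding variation_le_def by (meson order_trans)
  moreover have "(\<Sum>i<N. \<bar>b (q i) - b (p i)\<bar>) = (\<Sum>i<N. \<bar>b (x i) - b (m i)\<bar>)"
    by (intro sum.cong) (auto simp: p_def q_def min_def max_def abs_minus_commute)
  moreover have "(\<Sum>i<N. D i) \<le> (\<Sum>i<N. \<bar>b (x i) - b (m i)\<bar> + \<epsilon> / N)"
    by (rule sum_mono) (use x in fastforce)
  moreover have "(\<Sum>i<N. \<epsilon> / real N) \<le> \<epsilon>" using \<open>\<epsilon> > 0\<close> by simp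
  ultimately have "(\<Sum>i<N. D i) \<le> W + \<epsilon>" by (simp only: sum.distrib)
  with D show ?thesis by blast
qed

lemma summation_by_parts_ge:
  fixes w h :: "nat \<Rightarrow> real"
  assumes "\<forall>i\<le>Suc n. 0 \<le> h i \<and> h i \<le> M"
  shows "w n * h (Suc n) - w 0 * h 0 - M * (\<Sum>i<n. \<bar>w (Suc i) - w i\<bar>)
    \<le> (\<Sum>i<Suc n. w i * (h (Suc i) - h i))"
  using assms
proof (induction n)
  case (Suc n)
  have "0 \<le> h (Suc n)" "h (Suc n) \<le> M" using Suc.prems by auto
  then have "(w (Suc n) - w n) * h (Suc n) \<le> \<bar>w (Suc n) - w n\<bar> * M"
    by (meson abs_ge_self abs_ge_zero mult_mono order_trans)
  with Suc show ?case by (simp add: algebra_simps)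
qed (simp add: algebra_simps)

lemma summation_by_parts_decrease:
  fixes w x :: "nat \<Rightarrow> real"
  assumes x: "\<forall>i\<le>Suc n. x (Suc n) \<le> x i \<and> x i \<le> x 0" and "\<beta>0 \<le> w n"
    and var: "(\<Sum>i<n. \<bar>w (Suc i) - w i\<bar>) \<le> W"
  shows "(\<Sum>i<Suc n. w i * (x (Suc i) - x i)) \<le> - ((\<beta>0 - W) * (x 0 - x (Suc n)))"
proof -
  define h where "h i = x 0 - x i" for i
  define M where "M = x 0 - x (Suc n)"
  have h: "\<forall>i\<le>Suc n. 0 \<le> h i \<and> h i \<le> M" using x by (auto simp: h_def M_def)
  then have "0 \<le> M" by auto
  then have "M * \<beta>0 \<le> M * w n" "M * (\<Sum>i<n. \<bar>w (Suc i) - w i\<bar>) \<le> M * W"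
    using assms(2) var by (simp_all add: mult_left_mono)
  then have "(\<beta>0 - W) * M \<le> w n * M - M * (\<Sum>i<n. \<bar>w (Suc i) - w i\<bar>)"
    by (simp add: algebra_simps)
  also have "\<dots> \<le> (\<Sum>i<Suc n. w i * (h (Suc i) - h i))"
    using summation_by_parts_ge[OF h, of w] by (simp add: h_def M_def)
  also have "\<dots> = - (\<Sum>i<Suc n. w i * (x (Suc i) - x i))"
    unfolding h_def sum_negf[symmetric] by (intro sum.cong) (auto simp: algebra_simps)
  finally show ?thesis by (simp add: M_def)
qed

lemma increment_le_frozen_coefficient:
  fixes F G b :: "real \<Rightarrow> real"
  assumes "p \<le> q" and lipF: "CF-lipschitz_on {p..q} F" and lipG: "CG-lipschitz_on {p..q} G"
    and der: "AE t in lborel. t \<in> {p<..<q} \<longrightarrow>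
      (\<exists>d. (G has_real_derivative d) (at t) \<and> (F has_real_derivative b t * d) (at t) \<and> \<bar>d\<bar> \<le> K)"
    and osc: "\<forall>t\<in>{p<..<q}. \<bar>b t - \<beta>\<bar> \<le> D"
  shows "F q - F p \<le> \<beta> * (G q - G p) + D * K * (q - p)"
proof -
  define h where "h t = \<beta> * G t + D * K * t - F t" for t
  have lip: "(\<bar>\<beta>\<bar> * CG + \<bar>D * K\<bar> * 1 + CF)-lipschitz_on {p..q} h"
    unfolding h_def
    by (rule lipschitz_on_diff[OF lipschitz_on_add[OF lipschitz_on_cmult_real[OF lipG]
          lipschitz_on_cmult_real[OF lipschitz_on_id]] lipF])
  have "AE t in lborel. t \<in> {p<..<q} \<longrightarrow> (\<exists>d\<ge>0. (h has_real_derivative d) (at t))"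
    using der
  proof (rule eventually_mono, intro impI)
    fix t assume t: "t \<in> {p<..<q}" and "t \<in> {p<..<q} \<longrightarrow>
      (\<exists>d. (G has_real_derivative d) (at t) \<and> (F has_real_derivative b t * d) (at t) \<and> \<bar>d\<bar> \<le> K)"
    then obtain d where d: "(G has_real_derivative d) (at t)" "(F has_real_derivative b t * d) (at t)"
      "\<bar>d\<bar> \<le> K" by blast
    have "(h has_real_derivative \<beta> * d + D * K - b t * d) (at t)"
      unfolding h_def using d(1,2) by (auto intro!: derivative_eq_intros)
    moreover have "(b t - \<beta>) * d \<le> \<bar>b t - \<beta>\<bar> * \<bar>d\<bar>" by (simp add: abs_mult[symmetric])
    moreover have "\<bar>b t - \<beta>\<bar> * \<bar>d\<bar> \<le> D * K"
      using osc t d(3) by (intro mult_mono) (auto intro: order_trans)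
    ultimately show "\<exists>d\<ge>0. (h has_real_derivative d) (at t)"
      by (intro exI[of _ "\<beta> * d + D * K - b t * d"]) (auto simp: algebra_simps)
  qed
  from lipschitz_deriv_nonneg_ae_imp_mono[OF assms(1) lip this]
  show ?thesis unfolding h_def by (simp add: algebra_simps)
qed

lemma partition_sum_upper_bound:
  fixes F G b :: "real \<Rightarrow> real" and s m :: "nat \<Rightarrow> real"
  assumes "0 < \<Delta>" and s_step: "\<And>i. s (Suc i) = s i + \<Delta>" and m: "\<And>i. m i \<in> {s i<..<s (Suc i)}"
    and lipF: "CF-lipschitz_on {s 0..s N} F" and lipG: "CG-lipschitz_on {s 0..s N} G"
    and der: "AE t in lborel. t \<in> {s 0<..<s N} \<longrightarrow>
      (\<exists>d. (G has_real_derivative d) (at t) \<and> (F has_real_derivative b t * d) (at t) \<and> \<bar>d\<bar> \<le> K)"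
    and var: "variation_le b {s 0<..<s N} W" and "0 \<le> K"
  shows "F (s N) - F (s 0) \<le> (\<Sum>i<N. b (m i) * (G (s (Suc i)) - G (s i))) + (W + 1) * K * \<Delta>"
proof -
  have "mono s" unfolding mono_iff_le_Suc using s_step \<open>0 < \<Delta>\<close> by simp
  have sub: "{s i..s (Suc i)} \<subseteq> {s 0..s N}" if "i < N" for i
    using monoD[OF \<open>mono s\<close>, of 0 i] monoD[OF \<open>mono s\<close>, of "Suc i" N] that by auto
  then have sub': "{s i<..<s (Suc i)} \<subseteq> {s 0<..<s N}" if "i < N" for i
    using that m[of i] by fastforce
  obtain D where D: "\<forall>i<N. \<forall>t\<in>{s i<..<s (Suc i)}. \<bar>b t - b (m i)\<bar> \<le> D i"
    and D_sum: "(\<Sum>i<N. D i) \<le> W + 1"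
    using oscillation_sum_le_variation[OF var \<open>mono s\<close>, of 1 N m] sub' m by auto
  have step: "F (s (Suc i)) - F (s i) \<le> b (m i) * (G (s (Suc i)) - G (s i)) + D i * K * \<Delta>"
    if "i < N" for i
  proof -
    have "AE t in lborel. t \<in> {s i<..<s (Suc i)} \<longrightarrow>
      (\<exists>d. (G has_real_derivative d) (at t) \<and> (F has_real_derivative b t * d) (at t) \<and> \<bar>d\<bar> \<le> K)"
      by (rule AE_lborel_interval_subset[OF der sub'[OF that]])
    then show ?thesis
      using increment_le_frozen_coefficient[of "s i" "s (Suc i)" CF F CG G b K "b (m i)" "D i"]
        lipschitz_on_subset[OF lipF sub[OF that]] lipschitz_on_subset[OF lipG sub[OF that]]
        D that \<open>0 < \<Delta>\<close>
      by (simp add: s_step)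
  qed
  have "F (s N) - F (s 0) = (\<Sum>i<N. F (s (Suc i)) - F (s i))"
    by (rule sum_lessThan_telescope[symmetric])
  also have "\<dots> \<le> (\<Sum>i<N. b (m i) * (G (s (Suc i)) - G (s i)) + D i * K * \<Delta>)"
    by (rule sum_mono) (use step in auto)
  also have "\<dots> = (\<Sum>i<N. b (m i) * (G (s (Suc i)) - G (s i))) + (\<Sum>i<N. D i) * K * \<Delta>"
    by (simp add: sum.distrib sum_distrib_right)
  also have "(\<Sum>i<N. D i) * K * \<Delta> \<le> (W + 1) * K * \<Delta>"
    using D_sum \<open>0 \<le> K\<close> \<open>0 < \<Delta>\<close> by (intro mult_right_mono) auto
  finally show ?thesis by simp
qed

text \<open>With \<open>F' = b G'\<close>, the function \<open>F\<close> is the Stieltjes primitive of \<open>b\<close> against \<open>G\<close>. Summing by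
  parts on a fine partition of \<open>[c, t0]\<close>, where \<open>t0\<close> minimises \<open>G\<close>, gives
  \<open>F t0 \<le> -(\<beta>0 - W) (G c - G t0)\<close> up to an arbitrarily small error, which contradicts \<open>F \<ge> 0\<close>
  unless \<open>G\<close> is constant.\<close>
lemma stieltjes_primitive_nonneg_imp_const:
  fixes F G b :: "real \<Rightarrow> real"
  assumes "c < e" and lipF: "CF-lipschitz_on {c..e} F" and lipG: "CG-lipschitz_on {c..e} G"
    and der: "AE t in lborel. t \<in> {c<..<e} \<longrightarrow>
      (\<exists>d. (G has_real_derivative d) (at t) \<and> (F has_real_derivative b t * d) (at t) \<and> \<bar>d\<bar> \<le> K)"
    and "F c = 0" and F_nonneg: "\<forall>t\<in>{c..e}. 0 \<le> F t" and G_le: "\<forall>t\<in>{c..e}. G t \<le> G c"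
    and b_ge: "\<forall>t\<in>{c<..<e}. \<beta>0 \<le> b t" and var: "variation_le b {c<..<e} W" and "W < \<beta>0"
  shows "\<forall>t\<in>{c..e}. G t = G c"
proof (rule ccontr)
  assume "\<not> ?thesis"
  then obtain t1 where t1: "t1 \<in> {c..e}" "G t1 \<noteq> G c" by auto
  obtain t0 where t0: "t0 \<in> {c..e}" "\<forall>t\<in>{c..e}. G t0 \<le> G t"
    using continuous_attains_inf[OF compact_Icc _ lipschitz_on_continuous_on[OF lipG]] \<open>c < e\<close>
    by fastforce
  define M where "M = G c - G t0"
  have "M > 0" using t0 t1 G_le unfolding M_def by fastforce
  then have "c < t0" using t0 unfolding M_def by (cases "t0 = c") auto
  obtain d where "\<bar>d\<bar> \<le> K" using AE_lborel_interval_ex[OF der \<open>c < e\<close>] by blast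
  then have "0 \<le> K" by linarith
  have "0 \<le> W" by (rule variation_le_nonneg[OF var])
  obtain N :: nat where N: "K * (t0 - c) * (W + 1) / ((\<beta>0 - W) * M) < N"
    using reals_Archimedean2 by blast
  moreover have "0 \<le> K * (t0 - c) * (W + 1) / ((\<beta>0 - W) * M)"
    using \<open>0 \<le> K\<close> \<open>c < t0\<close> \<open>0 \<le> W\<close> \<open>W < \<beta>0\<close> \<open>M > 0\<close> by simp
  ultimately obtain n where n: "N = Suc n" by (cases N) auto
  define \<Delta> where "\<Delta> = (t0 - c) / N"
  define s where "s i = c + real i * \<Delta>" for i
  define m where "m i = s i + \<Delta> / 2" for i
  have "\<Delta> > 0" using \<open>c < t0\<close> n by (simp add: \<Delta>_def)
  have s_step: "s (Suc i) = s i + \<Delta>" for i by (simp add: s_def algebra_simps)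
  have m: "m i \<in> {s i<..<s (Suc i)}" for i using \<open>\<Delta> > 0\<close> by (simp add: m_def s_step)
  have s0: "s 0 = c" and sN: "s N = t0" using n by (simp_all add: s_def \<Delta>_def)
  have "mono s" "mono m" using \<open>\<Delta> > 0\<close> unfolding s_def m_def by (auto intro!: monoI mult_right_mono)
  have sub: "{s 0..s N} \<subseteq> {c..e}" "{s 0<..<s N} \<subseteq> {c<..<e}" using s0 sN t0 by auto
  have F_est: "F (s N) - F (s 0) \<le> (\<Sum>i<N. b (m i) * (G (s (Suc i)) - G (s i))) + (W + 1) * K * \<Delta>"
    by (rule partition_sum_upper_bound[where s = s and m = m and \<Delta> = \<Delta>, OF \<open>\<Delta> > 0\<close> s_step m
          lipschitz_on_subset[OF lipF sub(1)] lipschitz_on_subset[OF lipG sub(1)]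
          AE_lborel_interval_subset[OF der sub(2)] variation_le_subset[OF var sub(2)] \<open>0 \<le> K\<close>])
  have s_range: "s i \<in> {c..e}" if "i \<le> N" for i
    using monoD[OF \<open>mono s\<close>, of 0 i] monoD[OF \<open>mono s\<close> that] s0 sN t0 by auto
  have m_range: "m i \<in> {c<..<e}" if "i \<le> n" for i
    using m[of i] s_range[of i] s_range[of "Suc i"] that n by auto
  then have "set (map m [0..<N]) \<subseteq> {c<..<e}" using n by auto
  moreover have "sorted (map m [0..<N])" using \<open>mono m\<close> by (auto simp: sorted_iff_nth_mono monoD)
  ultimately have "list_variation b (map m [0..<N]) \<le> W" using var unfolding variation_le_def by blast
  then have "(\<Sum>i<n. \<bar>b (m (Suc i)) - b (m i)\<bar>) \<le> W"
    unfolding list_variation_eq_sum n by (simp del: upt_Suc add: nth_append)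
  moreover have "\<forall>i\<le>Suc n. G (s (Suc n)) \<le> G (s i) \<and> G (s i) \<le> G (s 0)"
    using s_range t0 G_le s0 sN n by auto
  moreover have "\<beta>0 \<le> b (m n)" using b_ge m_range[of n] by simp
  ultimately have "(\<Sum>i<N. b (m i) * (G (s (Suc i)) - G (s i))) \<le> - ((\<beta>0 - W) * M)"
    using summation_by_parts_decrease[of n "\<lambda>i. G (s i)" \<beta>0 "\<lambda>i. b (m i)" W] s0 sN n
    by (simp add: M_def)
  moreover have "(W + 1) * K * \<Delta> < (\<beta>0 - W) * M"
    using N n \<open>W < \<beta>0\<close> \<open>M > 0\<close> by (simp add: \<Delta>_def field_simps)
  ultimately show False using F_est F_nonneg t0 \<open>F c = 0\<close> s0 sN by fastforce
qed

section \<open>Derivatives along the curve\<close>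

lemma has_real_derivative_inner_left:
  fixes f :: "real \<Rightarrow> 'a::real_inner"
  assumes "(f has_vector_derivative f') (at t)"
  shows "((\<lambda>s. c \<bullet> f s) has_real_derivative c \<bullet> f') (at t)"
  using assms
  by (auto simp: has_field_derivative_def has_vector_derivative_def algebra_simps
      intro!: derivative_eq_intros)

lemma has_real_derivative_norm:
  fixes f :: "real \<Rightarrow> 'a::real_inner"
  assumes "(f has_vector_derivative f') (at t)" and "f t \<noteq> 0"
  shows "((\<lambda>s. norm (f s)) has_real_derivative f' \<bullet> sgn (f t)) (at t)"
proof -
  have "((\<lambda>s. norm (f s)) has_derivative (\<lambda>h. (h *\<^sub>R f') \<bullet> sgn (f t))) (at t)"
    using has_derivative_compose[OF assms(1)[unfolded has_vector_derivative_def]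
        has_derivative_norm[OF assms(2)]]
    by (simp add: o_def)
  moreover have "(\<lambda>h. (h *\<^sub>R f') \<bullet> sgn (f t)) = (*) (f' \<bullet> sgn (f t))" by auto
  ultimately show ?thesis by (simp add: has_field_derivative_def)
qed

lemma has_real_derivative_norm_at_zero:
  fixes f :: "real \<Rightarrow> 'a::real_normed_vector"
  assumes "(f has_vector_derivative 0) (at t)" and "f t = 0"
  shows "((\<lambda>s. norm (f s)) has_real_derivative 0) (at t)"
  using assms unfolding has_field_derivative_def has_vector_derivative_def has_derivative_iff_norm
  by (simp add: bounded_linear_mult_right)

lemma vector_derivative_zero_at_limit_of_zeros:
  fixes u :: "real \<Rightarrow> 'a::real_normed_vector"
  assumes "(u has_vector_derivative U) (at t)" and "u t = 0" and "t islimpt {s. u s = 0}"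
  shows "U = 0"
proof -
  have "at t within {s. u s = 0} \<noteq> bot" using assms(3) by (simp add: trivial_limit_within)
  moreover have "(u has_vector_derivative U) (at t within {s. u s = 0})"
    using assms(1) by (rule has_vector_derivative_at_within)
  moreover have "(u has_vector_derivative 0) (at t within {s. u s = 0})"
  proof (rule has_vector_derivative_transform[of t "{s. u s = 0}" u "\<lambda>_. 0" 0])
    show "t \<in> {s. u s = 0}" using assms(2) by simp
  qed simp_all
  ultimately show ?thesis using vector_derivative_unique_within by blast
qed

lemma unit_derivative_orthogonal:
  fixes f :: "real \<Rightarrow> 'a::real_inner"
  assumes "(f has_vector_derivative T) (at t)" and "d > 0" and "\<forall>s. \<bar>t - s\<bar> < d \<longrightarrow> norm (f s) = 1"
  shows "f t \<bullet> T = 0"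
proof (rule DERIV_local_max[OF has_real_derivative_inner_left[OF assms(1)] assms(2)])
  show "\<forall>s. \<bar>t - s\<bar> < d \<longrightarrow> f t \<bullet> f s \<le> f t \<bullet> f t"
  proof (intro allI impI)
    fix s assume "\<bar>t - s\<bar> < d"
    then have "norm (f s) = 1" "norm (f t) = 1" using assms(2,3) by auto
    then show "f t \<bullet> f s \<le> f t \<bullet> f t"
      using norm_cauchy_schwarz[of "f t" "f s"] by (simp add: dot_square_norm)
  qed
qed

text \<open>Linear dependence puts the unit vector \<open>l\<close> into the plane of the orthogonal pair \<open>x, y\<close>,
  where \<open>(l \<bullet> x)\<^sup>2 + (l \<bullet> y)\<^sup>2 / k\<^sup>2 = 1\<close>.\<close>
lemma lin_dep3_inner_square:
  fixes x y l :: "'a::real_inner"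
  assumes "lin_dep3 x y l" and "norm x = 1" and "norm y = k" and "k > 0" and "x \<bullet> y = 0"
    and "norm l = 1"
  shows "(l \<bullet> y)\<^sup>2 = k\<^sup>2 * (1 - (l \<bullet> x)\<^sup>2)"
proof -
  obtain a b c where abc: "(a, b, c) \<noteq> (0, 0, 0)" "a *\<^sub>R x + b *\<^sub>R y + c *\<^sub>R l = 0"
    using assms(1) unfolding lin_dep3_def by blast
  have xx: "x \<bullet> x = 1" and yy: "y \<bullet> y = k\<^sup>2" and yx: "y \<bullet> x = 0"
    using assms(2,3,5) by (simp_all add: dot_square_norm inner_commute)
  have "c \<noteq> 0"
  proof
    assume "c = 0"
    then have e: "a *\<^sub>R x + b *\<^sub>R y = 0" using abc by simp
    have "a = 0" using arg_cong[OF e, of "(\<bullet>) x"] xx assms(5) by (simp add: inner_add_right)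
    moreover have "b * k\<^sup>2 = 0" using arg_cong[OF e, of "(\<bullet>) y"] yy yx by (simp add: inner_add_right)
    ultimately show False using abc \<open>c = 0\<close> assms(4) by simp
  qed
  define \<alpha> \<gamma> where "\<alpha> = - a / c" and "\<gamma> = - b / c"
  have l: "l = \<alpha> *\<^sub>R x + \<gamma> *\<^sub>R y"
  proof -
    have "c *\<^sub>R l = - (a *\<^sub>R x + b *\<^sub>R y)" by (metis abc(2) add.commute eq_neg_iff_add_eq_0)
    moreover have "l = (1 / c) *\<^sub>R (c *\<^sub>R l)" using \<open>c \<noteq> 0\<close> by simp
    ultimately have "l = (1 / c) *\<^sub>R (- (a *\<^sub>R x + b *\<^sub>R y))" by simp
    then show ?thesis by (simp add: \<alpha>_def \<gamma>_def algebra_simps)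
  qed
  have lx: "l \<bullet> x = \<alpha>" and ly: "l \<bullet> y = \<gamma> * k\<^sup>2"
    using xx yy yx assms(5) by (simp_all add: l inner_add_left)
  have "l \<bullet> l = \<alpha>\<^sup>2 + \<gamma>\<^sup>2 * k\<^sup>2"
    using xx yy yx assms(5)
    by (simp add: l inner_add_left inner_add_right power2_eq_square algebra_simps inner_commute)
  then have "\<gamma>\<^sup>2 * k\<^sup>2 = 1 - \<alpha>\<^sup>2" using assms(6) by (simp add: dot_square_norm)
  moreover have "(l \<bullet> y)\<^sup>2 = k\<^sup>2 * (\<gamma>\<^sup>2 * k\<^sup>2)" unfolding ly by (simp add: power2_eq_square)
  ultimately show ?thesis using lx by simp
qed

lemma reduced_derivatives_at:
  fixes tau u :: "real \<Rightarrow> 'a::real_inner" and T U lam :: 'a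
  assumes dt: "(tau has_vector_derivative T) (at t)" and du: "(u has_vector_derivative U) (at t)"
    and ode1: "U + (u t \<bullet> T) *\<^sub>R tau t = bt *\<^sub>R (lam - (lam \<bullet> tau t) *\<^sub>R tau t)"
    and ode2: "norm (u t) *\<^sub>R T = k *\<^sub>R u t"
    and "k > 0" and "bt > 0" and lam: "norm lam = 1"
    and sphere: "d > 0" "\<forall>s. \<bar>t - s\<bar> < d \<longrightarrow> norm (tau s) = 1"
    and dep: "u t \<noteq> 0 \<Longrightarrow> lin_dep3 (tau t) T lam"
    and zeros: "u t = 0 \<Longrightarrow> t islimpt {s. u s = 0}"
  shows "((\<lambda>s. k * norm (u s)) has_real_derivative bt * (lam \<bullet> T)) (at t)
    \<and> (lam \<bullet> T)\<^sup>2 = k\<^sup>2 * (1 - (lam \<bullet> tau t)\<^sup>2)"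
proof -
  have tT: "tau t \<bullet> T = 0" by (rule unit_derivative_orthogonal[OF dt sphere])
  have tau_t: "norm (tau t) = 1" using sphere by auto
  show ?thesis
  proof (cases "u t = 0")
    case False
    define \<nu> where "\<nu> = norm (u t)"
    have "\<nu> > 0" using False by (simp add: \<nu>_def)
    have T: "T = (k / \<nu>) *\<^sub>R u t"
      using arg_cong[OF ode2, of "scaleR (1 / \<nu>)"] \<open>\<nu> > 0\<close> by (simp add: \<nu>_def)
    then have "norm T = k" using \<open>k > 0\<close> \<open>\<nu> > 0\<close> by (simp add: \<nu>_def)
    have "tau t \<bullet> u t = 0" using tT T \<open>k > 0\<close> \<open>\<nu> > 0\<close> by simp
    then have "U \<bullet> u t = bt * (lam \<bullet> u t)"
      using arg_cong[OF ode1, of "\<lambda>v. v \<bullet> u t"] by (simp add: inner_add_left inner_diff_left)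
    then have "k * (U \<bullet> sgn (u t)) = bt * (lam \<bullet> T)"
      using \<open>\<nu> > 0\<close> by (simp add: T sgn_div_norm \<nu>_def field_simps)
    then have "((\<lambda>s. k * norm (u s)) has_real_derivative bt * (lam \<bullet> T)) (at t)"
      using DERIV_cmult[OF has_real_derivative_norm[OF du False], of k] by simp
    moreover have "(lam \<bullet> T)\<^sup>2 = k\<^sup>2 * (1 - (lam \<bullet> tau t)\<^sup>2)"
      using lin_dep3_inner_square[OF dep[OF False] tau_t \<open>norm T = k\<close> \<open>k > 0\<close> tT lam] .
    ultimately show ?thesis ..
  next
    case True
    have "U = 0" using vector_derivative_zero_at_limit_of_zeros[OF du True zeros[OF True]] .
    define c where "c = lam \<bullet> tau t"
    have "bt *\<^sub>R (lam - c *\<^sub>R tau t) = 0" using ode1 True \<open>U = 0\<close> unfolding c_def by simp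
    then have lam_c: "lam = c *\<^sub>R tau t" using \<open>bt > 0\<close> by simp
    have "lam \<bullet> T = c * (tau t \<bullet> T)" by (subst lam_c) simp
    moreover have "norm lam = \<bar>c\<bar> * norm (tau t)" by (subst lam_c) simp
    ultimately have "lam \<bullet> T = 0" and "c\<^sup>2 = 1" using tT tau_t lam by (simp_all add: abs_square_eq_1)
    moreover have "((\<lambda>s. norm (u s)) has_real_derivative 0) (at t)"
      by (rule has_real_derivative_norm_at_zero) (use du \<open>U = 0\<close> True in simp_all)
    then have "((\<lambda>s. k * norm (u s)) has_real_derivative k * 0) (at t)" by (rule DERIV_cmult)
    ultimately show ?thesis by (simp add: c_def[symmetric])
  qed
qed

lemma countable_isolated_points:
  fixes S :: "real set"
  shows "countable {x\<in>S. \<not> x islimpt S}"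
proof -
  define X where "X = {x\<in>S. \<not> x islimpt S}"
  have "\<exists>p::rat \<times> rat. of_rat (fst p) < x \<and> x < of_rat (snd p)
      \<and> (\<forall>y\<in>S. of_rat (fst p) < y \<and> y < of_rat (snd p) \<longrightarrow> y = x)" if "x \<in> X" for x
  proof -
    obtain e where e: "e > 0" "\<forall>y\<in>S. y \<noteq> x \<longrightarrow> \<not> dist y x < e"
      using \<open>x \<in> X\<close> unfolding X_def islimpt_approachable by blast
    obtain q1 where q1: "x - e < of_rat q1" "of_rat q1 < x" using of_rat_dense[of "x - e" x] e by auto
    obtain q2 where q2: "x < of_rat q2" "of_rat q2 < x + e" using of_rat_dense[of x "x + e"] e by auto
    have "y = x" if "y \<in> S" "of_rat q1 < y" "y < of_rat q2" for y
      using e q1 q2 that by (auto simp: dist_real_def)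
    then show ?thesis using q1 q2 by (intro exI[of _ "(q1, q2)"]) auto
  qed
  then obtain \<phi> :: "real \<Rightarrow> rat \<times> rat" where \<phi>: "\<And>x. x \<in> X \<Longrightarrow> of_rat (fst (\<phi> x)) < x \<and> x < of_rat (snd (\<phi> x))
      \<and> (\<forall>y\<in>S. of_rat (fst (\<phi> x)) < y \<and> y < of_rat (snd (\<phi> x)) \<longrightarrow> y = x)"
    by metis
  have "inj_on \<phi> X"
  proof (rule inj_onI)
    fix x x' assume "x \<in> X" "x' \<in> X" "\<phi> x = \<phi> x'"
    then show "x = x'" using \<phi>[of x] \<phi>[of x'] unfolding X_def by auto
  qed
  then show ?thesis unfolding X_def[symmetric] by (rule countable_image_inj_on[rotated]) simp
qed

text \<open>Only countably many zeros of \<open>u\<close> are isolated, so at almost every zero the derivative of \<open>u\<close>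
  vanishes.\<close>
lemma AE_limit_point_of_zeros:
  fixes u :: "real \<Rightarrow> 'a::zero"
  shows "AE t in lborel. u t = 0 \<longrightarrow> t islimpt {s. u s = 0}"
proof (rule AE_I')
  show "{t\<in>{s. u s = 0}. \<not> t islimpt {s. u s = 0}} \<in> null_sets lborel"
    by (rule countable_imp_null_set_lborel[OF countable_isolated_points])
qed auto

lemma AE_reduced_derivatives:
  fixes tau tau' u u' :: "real \<Rightarrow> 'a::real_inner" and lam :: 'a
  assumes "0 < k" and beta_pos: "\<forall>t\<in>{0..L}. beta t > 0" and lam: "norm lam = 1"
    and sphere: "\<forall>t\<in>{0..L}. norm (tau t) = 1"
    and tau_deriv: "AE t in lborel. t \<in> {0<..<L} \<longrightarrow> (tau has_vector_derivative tau' t) (at t)"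
    and u_deriv: "AE t in lborel. t \<in> {0<..<L} \<longrightarrow> (u has_vector_derivative u' t) (at t)"
    and ode1: "AE t in lborel. t \<in> {0<..<L} \<longrightarrow>
      u' t + (u t \<bullet> tau' t) *\<^sub>R tau t = beta t *\<^sub>R (lam - (lam \<bullet> tau t) *\<^sub>R tau t)"
    and ode2: "AE t in lborel. t \<in> {0<..<L} \<longrightarrow> norm (u t) *\<^sub>R tau' t = k *\<^sub>R u t"
    and dep: "AE t in lborel. t \<in> {0<..<L} \<and> u t \<noteq> 0 \<longrightarrow> lin_dep3 (tau t) (tau' t) lam"
  shows "AE t in lborel. t \<in> {0<..<L} \<longrightarrow>
    ((\<lambda>s. lam \<bullet> tau s) has_real_derivative lam \<bullet> tau' t) (at t)
    \<and> ((\<lambda>s. k * norm (u s)) has_real_derivative beta t * (lam \<bullet> tau' t)) (at t)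
    \<and> (lam \<bullet> tau' t)\<^sup>2 = k\<^sup>2 * (1 - (lam \<bullet> tau t)\<^sup>2)"
  using tau_deriv u_deriv ode1 ode2 dep AE_limit_point_of_zeros[of u]
proof eventually_elim
  case (elim t)
  show ?case
  proof
    assume t: "t \<in> {0<..<L}"
    have "\<forall>s. \<bar>t - s\<bar> < min t (L - t) \<longrightarrow> norm (tau s) = 1"
    proof (intro allI impI)
      fix s assume "\<bar>t - s\<bar> < min t (L - t)"
      then have "s \<in> {0..L}" by auto
      then show "norm (tau s) = 1" using sphere by blast
    qed
    then have "((\<lambda>s. k * norm (u s)) has_real_derivative beta t * (lam \<bullet> tau' t)) (at t)
      \<and> (lam \<bullet> tau' t)\<^sup>2 = k\<^sup>2 * (1 - (lam \<bullet> tau t)\<^sup>2)"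
      using reduced_derivatives_at[of tau "tau' t" t u "u' t" "beta t" lam k "min t (L - t)"]
        elim t \<open>0 < k\<close> beta_pos lam by auto
    moreover have "((\<lambda>s. lam \<bullet> tau s) has_real_derivative lam \<bullet> tau' t) (at t)"
      using elim t by (auto intro: has_real_derivative_inner_left)
    ultimately show "((\<lambda>s. lam \<bullet> tau s) has_real_derivative lam \<bullet> tau' t) (at t)
      \<and> ((\<lambda>s. k * norm (u s)) has_real_derivative beta t * (lam \<bullet> tau' t)) (at t)
      \<and> (lam \<bullet> tau' t)\<^sup>2 = k\<^sup>2 * (1 - (lam \<bullet> tau t)\<^sup>2)" by blast
  qed
qed

lemma lipschitz_on_inner_unit:
  fixes f :: "'a::metric_space \<Rightarrow> 'b::real_inner"
  assumes "C-lipschitz_on S f" and "norm c = 1"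
  shows "C-lipschitz_on S (\<lambda>x. c \<bullet> f x)"
proof (rule lipschitz_onI)
  fix x y assume "x \<in> S" "y \<in> S"
  have "dist (c \<bullet> f x) (c \<bullet> f y) = \<bar>c \<bullet> (f x - f y)\<bar>" by (simp add: dist_real_def inner_diff_right)
  also have "\<dots> \<le> dist (f x) (f y)" using Cauchy_Schwarz_ineq2[of c "f x - f y"] assms(2) by (simp add: dist_norm)
  also have "\<dots> \<le> C * dist x y" using lipschitz_onD[OF assms(1) \<open>x \<in> S\<close> \<open>y \<in> S\<close>] .
  finally show "dist (c \<bullet> f x) (c \<bullet> f y) \<le> C * dist x y" .
qed (rule lipschitz_on_nonneg[OF assms(1)])

lemma lipschitz_on_norm:
  fixes f :: "'a::metric_space \<Rightarrow> 'b::real_normed_vector"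
  assumes "C-lipschitz_on S f"
  shows "C-lipschitz_on S (\<lambda>x. norm (f x))"
proof (rule lipschitz_onI)
  fix x y assume "x \<in> S" "y \<in> S"
  have "dist (norm (f x)) (norm (f y)) \<le> dist (f x) (f y)"
    by (simp add: dist_real_def dist_norm norm_triangle_ineq3)
  also have "\<dots> \<le> C * dist x y" using lipschitz_onD[OF assms \<open>x \<in> S\<close> \<open>y \<in> S\<close>] .
  finally show "dist (norm (f x)) (norm (f y)) \<le> C * dist x y" .
qed (rule lipschitz_on_nonneg[OF assms])

lemma inner_eq_one_iff_unit:
  fixes x y :: "'a::real_inner"
  assumes "norm x = 1" and "norm y = 1"
  shows "x \<bullet> y = 1 \<longleftrightarrow> y = x"
  using norm_cauchy_schwarz_eq[of x y] assms by auto

section \<open>Components of the complement of a closed set in an interval\<close>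

lemma component_absorbs_neighbourhood:
  fixes Z :: "real set"
  assumes "closed Z" and C: "C \<in> components ({a0..b0} - Z)"
    and x: "x \<in> closure C" "x \<in> {a0..b0}" "x \<notin> Z"
  shows "\<exists>\<epsilon>>0. {a0..b0} \<inter> ball x \<epsilon> \<subseteq> C"
proof -
  have "C \<noteq> {}" and CS: "C \<subseteq> {a0..b0} - Z" and "connected C"
    using C by (auto simp: in_components_maximal)
  obtain \<epsilon> where "\<epsilon> > 0" and \<epsilon>: "ball x \<epsilon> \<subseteq> - Z"
    using \<open>closed Z\<close> x(3) by (metis Compl_iff open_Compl open_contains_ball)
  define T where "T = {a0..b0} \<inter> ball x \<epsilon>"
  obtain c where "c \<in> C" "dist c x < \<epsilon>" using x(1) \<open>\<epsilon> > 0\<close> closure_approachable by blast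
  then have "c \<in> T \<inter> C" using CS by (auto simp: T_def dist_commute)
  moreover have "connected T" unfolding T_def by (intro convex_connected convex_Int) simp_all
  ultimately have "connected (T \<union> C)" using connected_Un \<open>connected C\<close> by blast
  moreover have "T \<subseteq> {a0..b0} - Z" using \<epsilon> by (auto simp: T_def)
  ultimately have "T \<union> C = C"
    using C CS \<open>C \<noteq> {}\<close> unfolding in_components_maximal by blast
  then show ?thesis using \<open>\<epsilon> > 0\<close> unfolding T_def by blast
qed

lemma component_Inf_in_complement:
  fixes Z :: "real set"
  assumes "closed Z" and C: "C \<in> components ({a0..b0} - Z)" and "a0 \<notin> C"
  shows "Inf C \<in> Z" and "Inf C \<in> {a0..b0}"
proof -
  have "C \<noteq> {}" and CS: "C \<subseteq> {a0..b0} - Z" using C by (auto simp: in_components_maximal)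
  then have "bdd_below C" by (intro bdd_belowI[of C a0]) auto
  then have cl: "Inf C \<in> closure C" using closure_contains_Inf \<open>C \<noteq> {}\<close> by blast
  moreover have "closure C \<subseteq> {a0..b0}" using CS by (intro closure_minimal) auto
  ultimately show "Inf C \<in> {a0..b0}" by auto
  show "Inf C \<in> Z"
  proof (rule ccontr)
    assume "Inf C \<notin> Z"
    then obtain \<epsilon> where "\<epsilon> > 0" and \<epsilon>: "{a0..b0} \<inter> ball (Inf C) \<epsilon> \<subseteq> C"
      using component_absorbs_neighbourhood[OF \<open>closed Z\<close> C cl \<open>Inf C \<in> {a0..b0}\<close>] by blast
    then have "Inf C \<in> C" using \<open>Inf C \<in> {a0..b0}\<close> by auto
    then have "a0 < Inf C" using \<open>Inf C \<in> {a0..b0}\<close> \<open>a0 \<notin> C\<close> by (cases "Inf C = a0") auto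
    then have "max a0 (Inf C - \<epsilon> / 2) \<in> C"
      using \<epsilon> \<open>\<epsilon> > 0\<close> \<open>Inf C \<in> {a0..b0}\<close> by (auto simp: dist_real_def)
    then have "Inf C \<le> max a0 (Inf C - \<epsilon> / 2)" using \<open>bdd_below C\<close> by (rule cInf_lower)
    then show False using \<open>a0 < Inf C\<close> \<open>\<epsilon> > 0\<close> by simp
  qed
qed

lemma component_Sup_in_complement:
  fixes Z :: "real set"
  assumes "closed Z" and C: "C \<in> components ({a0..b0} - Z)" and "b0 \<notin> C"
  shows "Sup C \<in> Z" and "Sup C \<in> {a0..b0}"
proof -
  have "C \<noteq> {}" and CS: "C \<subseteq> {a0..b0} - Z" using C by (auto simp: in_components_maximal)
  then have "bdd_above C" by (intro bdd_aboveI[of C b0]) auto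
  then have cl: "Sup C \<in> closure C" using closure_contains_Sup \<open>C \<noteq> {}\<close> by blast
  moreover have "closure C \<subseteq> {a0..b0}" using CS by (intro closure_minimal) auto
  ultimately show "Sup C \<in> {a0..b0}" by auto
  show "Sup C \<in> Z"
  proof (rule ccontr)
    assume "Sup C \<notin> Z"
    then obtain \<epsilon> where "\<epsilon> > 0" and \<epsilon>: "{a0..b0} \<inter> ball (Sup C) \<epsilon> \<subseteq> C"
      using component_absorbs_neighbourhood[OF \<open>closed Z\<close> C cl \<open>Sup C \<in> {a0..b0}\<close>] by blast
    then have "Sup C \<in> C" using \<open>Sup C \<in> {a0..b0}\<close> by auto
    then have "Sup C < b0" using \<open>Sup C \<in> {a0..b0}\<close> \<open>b0 \<notin> C\<close> by (cases "Sup C = b0") auto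
    then have "min b0 (Sup C + \<epsilon> / 2) \<in> C"
      using \<epsilon> \<open>\<epsilon> > 0\<close> \<open>Sup C \<in> {a0..b0}\<close> by (auto simp: dist_real_def)
    then have "min b0 (Sup C + \<epsilon> / 2) \<le> Sup C" using \<open>bdd_above C\<close> by (rule cSup_upper)
    then show False using \<open>Sup C < b0\<close> \<open>\<epsilon> > 0\<close> by simp
  qed
qed

lemma component_interval_between_points_of_complement:
  fixes Z :: "real set"
  assumes "closed Z" and C: "C \<in> components ({a0..b0} - Z)" and "a0 \<notin> C" and "b0 \<notin> C"
  shows "\<exists>a b. a < b \<and> C = {a<..<b} \<and> a \<in> Z \<and> b \<in> Z \<and> a0 \<le> a \<and> b \<le> b0"
proof -
  have "C \<noteq> {}" and CS: "C \<subseteq> {a0..b0} - Z" and "connected C"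
    using C by (auto simp: in_components_maximal)
  have bdd: "bdd_below C" "bdd_above C"
    using CS by (intro bdd_belowI[of C a0] bdd_aboveI[of C b0]; auto)+
  define a b where "a = Inf C" and "b = Sup C"
  have ends: "a \<in> Z" "a \<in> {a0..b0}" "b \<in> Z" "b \<in> {a0..b0}"
    unfolding a_def b_def using component_Inf_in_complement[OF assms(1-3)]
      component_Sup_in_complement[OF assms(1,2,4)] by auto
  have "C = {a<..<b}"
  proof
    show "C \<subseteq> {a<..<b}"
    proof
      fix x assume "x \<in> C"
      then have "a \<le> x" "x \<le> b" "x \<notin> Z"
        using bdd CS unfolding a_def b_def by (auto intro: cInf_lower cSup_upper)
      then show "x \<in> {a<..<b}" using ends by (cases "x = a \<or> x = b") auto
    qed
    show "{a<..<b} \<subseteq> C"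
    proof
      fix x assume x: "x \<in> {a<..<b}"
      obtain c1 where "c1 \<in> C" "c1 < x" using cInf_lessD[OF \<open>C \<noteq> {}\<close>] x unfolding a_def by auto
      moreover obtain c2 where "c2 \<in> C" "x < c2" using less_cSupD[OF \<open>C \<noteq> {}\<close>] x unfolding b_def by auto
      ultimately show "x \<in> C"
        using \<open>connected C\<close> unfolding is_interval_connected_1[symmetric] is_interval_1
        by (meson less_imp_le)
    qed
  qed
  moreover have "a < b" using \<open>C \<noteq> {}\<close> calculation by auto
  ultimately show ?thesis using ends by auto
qed

lemma finite_components_if_meet_finite_set:
  assumes "finite P" and meet: "\<And>C. C \<in> components S \<Longrightarrow> C \<inter> P \<noteq> {}"
  shows "finite (components S)"
proof -
  have "\<forall>C\<in>components S. \<exists>x. x \<in> C \<inter> P" using meet by blast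
  then obtain pick where pick: "\<And>C. C \<in> components S \<Longrightarrow> pick C \<in> C \<inter> P"
    by metis
  have "inj_on pick (components S)"
  proof (rule inj_onI)
    fix C C' assume C: "C \<in> components S" "C' \<in> components S" and "pick C = pick C'"
    then have "pick C \<in> C \<inter> C'" using pick[of C] pick[of C'] by auto
    then show "C = C'" using components_eq[OF C] by auto
  qed
  moreover have "pick ` components S \<subseteq> P" using pick by blast
  ultimately show ?thesis using \<open>finite P\<close> by (rule inj_on_finite)
qed

text \<open>Every component of \<open>[a0, b0] - Z\<close> that misses both ends is a gap of \<open>Z\<close>; since gaps
  are long, each component meets the grid of mesh \<open>\<delta> / 2\<close> or an end point.\<close>
lemma finite_components_if_gaps_long:
  fixes Z :: "real set"
  assumes "closed Z" and "\<delta> > 0"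
    and gaps: "\<And>a b. a \<in> Z \<Longrightarrow> b \<in> Z \<Longrightarrow> a0 \<le> a \<Longrightarrow> a < b \<Longrightarrow> b \<le> b0 \<Longrightarrow> {a<..<b} \<inter> Z = {} \<Longrightarrow> \<delta> \<le> b - a"
  shows "finite (components ({a0..b0} - Z))"
proof (rule finite_components_if_meet_finite_set)
  define grid where "grid = (\<lambda>j::int. a0 + of_int j * (\<delta> / 2)) ` {0..\<lceil>2 * (b0 - a0) / \<delta>\<rceil>}"
  show "finite ({a0, b0} \<union> grid)" unfolding grid_def by simp
  fix C assume C: "C \<in> components ({a0..b0} - Z)"
  show "C \<inter> ({a0, b0} \<union> grid) \<noteq> {}"
  proof (cases "a0 \<in> C \<or> b0 \<in> C")
    case False
    then obtain a b where ab: "a < b" "C = {a<..<b}" "a \<in> Z" "b \<in> Z" "a0 \<le> a" "b \<le> b0"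
      using component_interval_between_points_of_complement[OF \<open>closed Z\<close> C] by blast
    then have "{a<..<b} \<inter> Z = {}" using in_components_subset[OF C] by auto
    then have long: "\<delta> \<le> b - a" using gaps ab by blast
    define h where "h = \<delta> / 2"
    have "h > 0" using \<open>\<delta> > 0\<close> by (simp add: h_def)
    define j where "j = \<lfloor>(a - a0) / h\<rfloor> + 1"
    have "(a - a0) / h < j" "j - 1 \<le> (a - a0) / h" unfolding j_def by linarith+
    then have "a - a0 < j * h" "(j - 1) * h \<le> a - a0"
      using \<open>h > 0\<close> by (simp_all add: pos_divide_less_eq pos_le_divide_eq)
    then have x: "a0 + j * h \<in> {a<..<b}" using long by (simp add: h_def left_diff_distrib)
    have "0 \<le> (a - a0) / h" using ab \<open>h > 0\<close> by simp
    then have "0 \<le> j" unfolding j_def by linarith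
    moreover have "j * h < b0 - a0" using x ab by simp
    then have "j < 2 * (b0 - a0) / \<delta>" using \<open>h > 0\<close> by (simp add: h_def field_simps)
    ultimately have "a0 + j * h \<in> grid"
      unfolding grid_def h_def by (intro imageI) (simp add: le_ceiling_iff)
    then show ?thesis using x ab by blast
  qed auto
qed

section \<open>The reduced scalar system\<close>

text \<open>The curve enters only through \<open>g = \<lambda> \<bullet> \<tau>\<close>, \<open>f = k \<bar>u\<bar>\<close> and \<open>g' = \<lambda> \<bullet> \<tau>'\<close>; \<open>phi\<close> is a version of
  \<open>g'\<close> that is continuous where \<open>f > 0\<close>, namely \<open>\<lambda> \<bullet> (k / \<bar>u\<bar>) u\<close>.\<close>
locale reduced_curve =
  fixes L k :: real and beta g f g' phi :: "real \<Rightarrow> real"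
  assumes L_pos: "0 < L" and k_pos: "0 < k"
    and g_lipschitz: "\<exists>C. C-lipschitz_on {0..L} g"
    and f_lipschitz: "\<exists>C. C-lipschitz_on {0..L} f"
    and g_bounded: "\<forall>t\<in>{0..L}. \<bar>g t\<bar> \<le> 1"
    and f_nonneg: "\<forall>t\<in>{0..L}. 0 \<le> f t"
    and beta_lower: "\<exists>\<beta>0>0. \<forall>t\<in>{0..L}. \<beta>0 \<le> beta t"
    and beta_bv: "bounded_variation_on beta 0 L"
    and derivs: "AE t in lborel. t \<in> {0<..<L} \<longrightarrow>
      (g has_real_derivative g' t) (at t) \<and> (f has_real_derivative beta t * g' t) (at t)
      \<and> (g' t)\<^sup>2 = k\<^sup>2 * (1 - (g t)\<^sup>2)"
    and phi_cont: "\<And>t. t \<in> {0<..<L} \<Longrightarrow> 0 < f t \<Longrightarrow> isCont phi t"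
    and phi_eq: "AE t in lborel. t \<in> {0<..<L} \<and> 0 < f t \<longrightarrow> g' t = phi t"
begin

definition singular_set :: "real set" where
  "singular_set = {t\<in>{0..L}. \<bar>g t\<bar> = 1 \<and> f t = 0}"

lemma closed_singular_set: "closed singular_set"
proof -
  obtain Cg Cf where "Cg-lipschitz_on {0..L} g" "Cf-lipschitz_on {0..L} f"
    using g_lipschitz f_lipschitz by blast
  then have cont: "continuous_on {0..L} (\<lambda>t. \<bar>g t\<bar>)" "continuous_on {0..L} f"
    by (auto intro: continuous_on_rabs lipschitz_on_continuous_on)
  have "closed {t\<in>{0..L}. \<bar>g t\<bar> = 1}"
    by (rule continuous_closed_preimage_constant[OF cont(1) closed_atLeastAtMost])
  moreover have "closed {t\<in>{0..L}. f t = 0}"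
    by (rule continuous_closed_preimage_constant[OF cont(2) closed_atLeastAtMost])
  moreover have "singular_set = {t\<in>{0..L}. \<bar>g t\<bar> = 1} \<inter> {t\<in>{0..L}. f t = 0}"
    unfolding singular_set_def by blast
  ultimately show ?thesis by (simp add: closed_Int)
qed

lemma AE_bounded_deriv: "AE t in lborel. t \<in> {0<..<L} \<longrightarrow>
    (\<exists>d. (g has_real_derivative d) (at t) \<and> (f has_real_derivative beta t * d) (at t) \<and> \<bar>d\<bar> \<le> k)"
  using derivs
proof (rule eventually_mono, intro impI)
  fix t assume t: "t \<in> {0<..<L}" and "t \<in> {0<..<L} \<longrightarrow>
      (g has_real_derivative g' t) (at t) \<and> (f has_real_derivative beta t * g' t) (at t)
      \<and> (g' t)\<^sup>2 = k\<^sup>2 * (1 - (g t)\<^sup>2)"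
  then have d: "(g has_real_derivative g' t) (at t)" "(f has_real_derivative beta t * g' t) (at t)"
    and sq: "(g' t)\<^sup>2 = k\<^sup>2 * (1 - (g t)\<^sup>2)" by auto
  have "(g' t)\<^sup>2 = k\<^sup>2 - k\<^sup>2 * (g t)\<^sup>2" using sq by (simp add: right_diff_distrib)
  moreover have "0 \<le> k\<^sup>2 * (g t)\<^sup>2" by simp
  ultimately have "(g' t)\<^sup>2 \<le> k\<^sup>2" by linarith
  then have "\<bar>g' t\<bar> \<le> k" using abs_le_square_iff[of "g' t" k] k_pos by simp
  with d show "\<exists>d. (g has_real_derivative d) (at t) \<and> (f has_real_derivative beta t * d) (at t) \<and> \<bar>d\<bar> \<le> k"
    by blast
qed

lemma const_g_imp_const_f:
  assumes "0 \<le> p" "q \<le> L" and const: "\<forall>t\<in>{p..q}. g t = c" and "t \<in> {p..q}"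
  shows "f t = f p"
proof -
  obtain C where "C-lipschitz_on {0..L} f" using f_lipschitz by blast
  then have "C-lipschitz_on {p..t} f" by (rule lipschitz_on_subset) (use assms in auto)
  moreover have sub: "{p<..<t} \<subseteq> {0<..<L}" using assms by auto
  have "AE s in lborel. s \<in> {p<..<t} \<longrightarrow> (f has_real_derivative 0) (at s)"
    using AE_lborel_interval_subset[OF derivs sub]
  proof (rule eventually_mono, intro impI)
    fix s assume s: "s \<in> {p<..<t}" and "s \<in> {p<..<t} \<longrightarrow>
      (g has_real_derivative g' s) (at s) \<and> (f has_real_derivative beta s * g' s) (at s)
      \<and> (g' s)\<^sup>2 = k\<^sup>2 * (1 - (g s)\<^sup>2)"
    then have d: "(g has_real_derivative g' s) (at s)" "(f has_real_derivative beta s * g' s) (at s)"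
      by auto
    have "g' s = 0"
      by (rule deriv_zero_of_locally_const[OF d(1), of p q]) (use s assms in auto)
    then show "(f has_real_derivative 0) (at s)" using d(2) by simp
  qed
  ultimately show ?thesis using lipschitz_deriv_zero_ae_imp_const[of p t C f] assms(4) by simp
qed

lemma const_g_imp_unit:
  assumes "0 \<le> p" "p < q" "q \<le> L" and const: "\<forall>t\<in>{p..q}. g t = c"
  shows "\<bar>c\<bar> = 1"
proof -
  have "{p<..<q} \<subseteq> {0<..<L}" using assms by auto
  from AE_lborel_interval_ex[OF AE_lborel_interval_subset[OF derivs this] \<open>p < q\<close>]
  obtain t where t: "t \<in> {p<..<q}" "(g has_real_derivative g' t) (at t)"
    "(g' t)\<^sup>2 = k\<^sup>2 * (1 - (g t)\<^sup>2)"
    by blast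
  have "g t = c" using const t(1) by auto
  moreover have "g' t = 0" by (rule deriv_zero_of_locally_const[OF t(2) t(1) const])
  ultimately have "c\<^sup>2 = 1" using t(3) k_pos by simp
  then show ?thesis by (simp add: abs_square_eq_1)
qed

lemma const_g_imp_subset_singular_set:
  assumes "0 \<le> p" "p < q" "q \<le> L" and const: "\<forall>t\<in>{p..q}. g t = c" and "f p = 0"
  shows "{p..q} \<subseteq> singular_set"
  using const_g_imp_unit[OF assms(1-4)] const_g_imp_const_f[OF assms(1) assms(3) const] assms
  unfolding singular_set_def by auto

lemma right_max_at_zero_imp_singular_interval:
  assumes "0 \<le> c" "c < L" "f c = 0" "0 < \<delta>" and max: "\<forall>t\<in>{c..min L (c + \<delta>)}. g t \<le> g c"
  shows "\<exists>e>c. e \<le> L \<and> {c..e} \<subseteq> singular_set"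
proof -
  obtain \<beta>0 where "\<beta>0 > 0" and \<beta>0: "\<forall>t\<in>{0..L}. \<beta>0 \<le> beta t" using beta_lower by blast
  obtain V where "variation_le beta {0..L} V"
    using beta_bv bounded_variation_on_iff_variation_le by blast
  then have "variation_le beta {c<..<L} V" by (rule variation_le_subset) (use \<open>0 \<le> c\<close> in auto)
  then obtain \<delta>1 where "\<delta>1 > 0" and var: "variation_le beta {c<..<c + \<delta>1} (\<beta>0 / 2)"
    using variation_le_small_right[OF _ \<open>c < L\<close>, of beta V "\<beta>0 / 2"] \<open>\<beta>0 > 0\<close> by auto
  define e where "e = min (c + \<delta>1) (min L (c + \<delta>))"
  have e: "c < e" "e \<le> L" "e \<le> c + \<delta>1" "e \<le> min L (c + \<delta>)"
    using \<open>\<delta>1 > 0\<close> \<open>0 < \<delta>\<close> \<open>c < L\<close> unfolding e_def by auto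
  have sub: "{c..e} \<subseteq> {0..L}" "{c<..<e} \<subseteq> {0<..<L}" using e \<open>0 \<le> c\<close> by auto
  obtain Cg Cf where "Cg-lipschitz_on {0..L} g" "Cf-lipschitz_on {0..L} f"
    using g_lipschitz f_lipschitz by blast
  then have lip: "Cg-lipschitz_on {c..e} g" "Cf-lipschitz_on {c..e} f"
    using sub(1) lipschitz_on_subset by blast+
  have var_e: "variation_le beta {c<..<e} (\<beta>0 / 2)"
    by (rule variation_le_subset[OF var]) (use e in auto)
  have bounds: "\<forall>t\<in>{c..e}. 0 \<le> f t" "\<forall>t\<in>{c..e}. g t \<le> g c" "\<forall>t\<in>{c<..<e}. \<beta>0 \<le> beta t"
    using f_nonneg max \<beta>0 sub e(4) by auto
  have "\<forall>t\<in>{c..e}. g t = g c"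
    by (rule stieltjes_primitive_nonneg_imp_const[OF \<open>c < e\<close> lip(2) lip(1)
        AE_lborel_interval_subset[OF AE_bounded_deriv sub(2)] \<open>f c = 0\<close> bounds var_e])
      (use \<open>\<beta>0 > 0\<close> in simp)
  then have "{c..e} \<subseteq> singular_set"
    by (rule const_g_imp_subset_singular_set[OF \<open>0 \<le> c\<close> \<open>c < e\<close> \<open>e \<le> L\<close> _ \<open>f c = 0\<close>])
  with e show ?thesis by blast
qed

lemma AE_deriv_near_f_pos:
  assumes s: "s \<in> {0<..<L}" and "0 < f s"
  obtains d where "0 < d" and "{s - d..s + d} \<subseteq> {0<..<L}"
    and "AE y in lborel. y \<in> {s - d<..<s + d} \<longrightarrow>
      (g has_real_derivative phi y) (at y) \<and> (phi y)\<^sup>2 = k\<^sup>2 * (1 - (g y)\<^sup>2)"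
proof -
  obtain Cf where "Cf-lipschitz_on {0..L} f" using f_lipschitz by blast
  moreover have "s \<in> interior {0..L}" using s by simp
  ultimately have "isCont f s" using continuous_on_interior lipschitz_on_continuous_on by blast
  then obtain d1 where "d1 > 0" and d1: "\<And>y. dist y s < d1 \<Longrightarrow> dist (f y) (f s) < f s"
    using \<open>0 < f s\<close> unfolding continuous_at_eps_delta by blast
  define d where "d = min d1 (min s (L - s)) / 2"
  have "0 < d" using \<open>d1 > 0\<close> s by (simp add: d_def)
  have near: "y \<in> {0<..<L} \<and> 0 < f y" if "\<bar>y - s\<bar> \<le> d" for y
  proof -
    have "\<bar>y - s\<bar> < d1" "\<bar>y - s\<bar> < s" "\<bar>y - s\<bar> < L - s"
      using that \<open>d1 > 0\<close> s unfolding d_def by auto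
    then show ?thesis using d1[of y] by (auto simp: dist_real_def abs_less_iff)
  qed
  show thesis
  proof (rule that[OF \<open>0 < d\<close>])
    show "{s - d..s + d} \<subseteq> {0<..<L}" using near by (auto simp: abs_le_iff)
    show "AE y in lborel. y \<in> {s - d<..<s + d} \<longrightarrow>
        (g has_real_derivative phi y) (at y) \<and> (phi y)\<^sup>2 = k\<^sup>2 * (1 - (g y)\<^sup>2)"
      using derivs phi_eq
    proof eventually_elim
      case (elim y)
      show ?case
      proof
        assume "y \<in> {s - d<..<s + d}"
        then have "y \<in> {0<..<L}" "0 < f y" using near[of y] by auto
        with elim show "(g has_real_derivative phi y) (at y) \<and> (phi y)\<^sup>2 = k\<^sup>2 * (1 - (g y)\<^sup>2)"
          by auto
      qed
    qed
  qed
qed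

text \<open>The identity \<open>g'\<^sup>2 = k\<^sup>2 (1 - g\<^sup>2)\<close> holds only almost everywhere, but at points with \<open>f > 0\<close>
  both sides of its version with \<open>phi\<close> are continuous.\<close>
lemma phi_square_at_f_pos:
  assumes s: "s \<in> {0<..<L}" and "0 < f s"
  shows "(phi s)\<^sup>2 = k\<^sup>2 * (1 - (g s)\<^sup>2)"
proof -
  obtain d where "0 < d" and AE_phi: "AE y in lborel. y \<in> {s - d<..<s + d} \<longrightarrow>
      (g has_real_derivative phi y) (at y) \<and> (phi y)\<^sup>2 = k\<^sup>2 * (1 - (g y)\<^sup>2)"
    using AE_deriv_near_f_pos[OF assms] by blast
  obtain Cg where "Cg-lipschitz_on {0..L} g" using g_lipschitz by blast
  moreover have "s \<in> interior {0..L}" using s by simp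
  ultimately have "isCont g s" using continuous_on_interior lipschitz_on_continuous_on by blast
  have "(phi s)\<^sup>2 - k\<^sup>2 * (1 - (g s)\<^sup>2) = 0"
  proof (rule isCont_zero_if_zeros_accumulate[where h = "\<lambda>y. (phi y)\<^sup>2 - k\<^sup>2 * (1 - (g y)\<^sup>2)"])
    show "isCont (\<lambda>y. (phi y)\<^sup>2 - k\<^sup>2 * (1 - (g y)\<^sup>2)) s"
      using phi_cont[OF assms] \<open>isCont g s\<close> by (intro continuous_intros)
    fix r :: real assume "r > 0"
    then have "0 < min r d" using \<open>0 < d\<close> by simp
    then have lt: "s - min r d < s + min r d" by linarith
    have sub: "{s - min r d<..<s + min r d} \<subseteq> {s - d<..<s + d}" by auto
    have "AE y in lborel. y \<in> {s - min r d<..<s + min r d} \<longrightarrow> (phi y)\<^sup>2 = k\<^sup>2 * (1 - (g y)\<^sup>2)"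
      using AE_lborel_interval_subset[OF AE_phi sub] by (rule eventually_mono) blast
    from AE_lborel_interval_ex[OF this lt]
    obtain y where "y \<in> {s - min r d<..<s + min r d}" and "(phi y)\<^sup>2 = k\<^sup>2 * (1 - (g y)\<^sup>2)"
      by blast
    moreover have "\<bar>y - s\<bar> < r" using \<open>y \<in> {s - min r d<..<s + min r d}\<close> by auto
    ultimately show "\<exists>y. \<bar>y - s\<bar> < r \<and> (phi y)\<^sup>2 - k\<^sup>2 * (1 - (g y)\<^sup>2) = 0" by auto
  qed
  then show ?thesis by simp
qed

lemma f_pos_not_local_max:
  assumes s: "s \<in> {0<..<L}" and "0 < f s" and "\<bar>g s\<bar> < 1" and "0 < r"
  shows "\<exists>t\<in>{0..L}. \<bar>t - s\<bar> < r \<and> g s < g t"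
proof -
  obtain d where "0 < d" and sub: "{s - d..s + d} \<subseteq> {0<..<L}" and AE_phi: "AE y in lborel.
      y \<in> {s - d<..<s + d} \<longrightarrow> (g has_real_derivative phi y) (at y) \<and> (phi y)\<^sup>2 = k\<^sup>2 * (1 - (g y)\<^sup>2)"
    using AE_deriv_near_f_pos[OF s \<open>0 < f s\<close>] by blast
  define \<rho> where "\<rho> = min d (r / 2)"
  have "0 < \<rho>" "\<rho> < r" using \<open>0 < d\<close> \<open>0 < r\<close> by (auto simp: \<rho>_def)
  have "\<rho> \<le> d" by (simp add: \<rho>_def)
  then have "{s - \<rho>..s + \<rho>} \<subseteq> {s - d..s + d}" and sub_\<rho>2: "{s - \<rho><..<s + \<rho>} \<subseteq> {s - d<..<s + d}"
    by auto
  moreover have "{s - d..s + d} \<subseteq> {0..L}" using sub by (rule order_trans) auto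
  ultimately have sub_\<rho>: "{s - \<rho>..s + \<rho>} \<subseteq> {0..L}" "{s - \<rho><..<s + \<rho>} \<subseteq> {s - d<..<s + d}"
    by auto
  obtain Cg where "Cg-lipschitz_on {0..L} g" using g_lipschitz by blast
  then have "Cg-lipschitz_on {s - \<rho>..s + \<rho>} g" using sub_\<rho>(1) by (rule lipschitz_on_subset)
  moreover have "AE y in lborel. y \<in> {s - \<rho><..<s + \<rho>} \<longrightarrow> (g has_real_derivative phi y) (at y)"
    using AE_lborel_interval_subset[OF AE_phi sub_\<rho>(2)] by (rule eventually_mono) blast
  moreover have "phi s \<noteq> 0"
    using phi_square_at_f_pos[OF s \<open>0 < f s\<close>] k_pos \<open>\<bar>g s\<bar> < 1\<close> by (auto simp: abs_square_eq_1)
  ultimately obtain t where "t \<in> {s - \<rho>..s + \<rho>}" "g s < g t"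
    using not_local_max_if_deriv_continuous_nonzero[OF _ \<open>0 < \<rho>\<close> _ phi_cont[OF s \<open>0 < f s\<close>]]
    by blast
  then show ?thesis using sub_\<rho>(1) \<open>\<rho> < r\<close> \<open>0 < \<rho>\<close> by (intro bexI[of _ t]) (auto simp: abs_le_iff)
qed

lemma gap_left_end:
  assumes a: "a \<in> singular_set" and b: "b \<in> singular_set" and "a < b"
    and gap: "{a<..<b} \<inter> singular_set = {}"
  shows "g a = -1"
proof (rule ccontr)
  assume "g a \<noteq> -1"
  with a have "g a = 1" "0 \<le> a" "f a = 0" unfolding singular_set_def by auto
  moreover have "b \<le> L" using b unfolding singular_set_def by simp
  ultimately have max: "\<forall>t\<in>{a..min L (a + (b - a))}. g t \<le> g a"
  proof (intro ballI)
    fix t assume "t \<in> {a..min L (a + (b - a))}"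
    then have "\<bar>g t\<bar> \<le> 1" using g_bounded \<open>0 \<le> a\<close> by auto
    then show "g t \<le> g a" using \<open>g a = 1\<close> by (simp add: abs_le_iff)
  qed
  have "a < L" "0 < b - a" using \<open>a < b\<close> \<open>b \<le> L\<close> by simp_all
  from right_max_at_zero_imp_singular_interval[OF \<open>0 \<le> a\<close> this(1) \<open>f a = 0\<close> this(2) max]
  obtain e where "a < e" and e: "{a..e} \<subseteq> singular_set" by blast
  have "(a + min e b) / 2 \<in> {a<..<b} \<inter> {a..e}" using \<open>a < e\<close> \<open>a < b\<close> by auto
  then show False using gap e by blast
qed

text \<open>An interior maximum off the singular set with \<open>\<bar>g\<bar> < 1\<close> can be neither a zero of \<open>f\<close>, where \<open>g\<close>
  would be flat, nor a point where \<open>f > 0\<close>, where \<open>g\<close> is strictly monotone.\<close>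
lemma no_interior_max_off_singular_set:
  assumes s: "s \<in> {a<..<b}" and ab: "{a..b} \<subseteq> {0..L}" and "s \<notin> singular_set" and "\<bar>g s\<bar> < 1"
    and max: "\<forall>t\<in>{a..b}. g t \<le> g s"
  shows False
proof -
  have "s \<in> {0<..<L}" using s ab by auto
  show False
  proof (cases "f s = 0")
    case True
    have "\<forall>t\<in>{s..min L (s + (b - s))}. g t \<le> g s"
    proof
      fix t assume "t \<in> {s..min L (s + (b - s))}"
      then have "t \<in> {a..b}" using s by auto
      then show "g t \<le> g s" using max by blast
    qed
    then obtain e where "s < e" "{s..e} \<subseteq> singular_set"
      using right_max_at_zero_imp_singular_interval[OF _ _ True, of "b - s"] \<open>s \<in> {0<..<L}\<close> s by auto
    then have "s \<in> singular_set" by auto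
    then show False using \<open>s \<notin> singular_set\<close> by contradiction
  next
    case False
    moreover have "0 \<le> f s" using f_nonneg \<open>s \<in> {0<..<L}\<close> by auto
    ultimately have "0 < f s" by simp
    moreover have "0 < min (s - a) (b - s)" using s by simp
    ultimately obtain t where t: "t \<in> {0..L}" "\<bar>t - s\<bar> < min (s - a) (b - s)" "g s < g t"
      using f_pos_not_local_max[OF \<open>s \<in> {0<..<L}\<close> _ \<open>\<bar>g s\<bar> < 1\<close>] by blast
    then have "\<bar>t - s\<bar> < s - a" "\<bar>t - s\<bar> < b - s" by auto
    then have "t \<in> {a..b}" unfolding abs_less_iff by auto
    then have "g t \<le> g s" using max by blast
    then show False using t(3) by simp
  qed
qed

lemma gap_attains_one:
  assumes a: "a \<in> singular_set" and b: "b \<in> singular_set" and "a < b"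
    and gap: "{a<..<b} \<inter> singular_set = {}"
  shows "\<exists>s\<in>{a..b}. g s = 1"
proof (rule ccontr)
  assume none: "\<not> ?thesis"
  have ab: "0 \<le> a" "b \<le> L" "f a = 0" using a b unfolding singular_set_def by auto
  have ga: "g a = -1" by (rule gap_left_end[OF assms])
  have "\<bar>g b\<bar> = 1" using b unfolding singular_set_def by simp
  moreover have "g b \<noteq> 1" using none \<open>a < b\<close> by auto
  ultimately have gb: "g b = -1" by (cases "0 \<le> g b") auto
  obtain Cg where "Cg-lipschitz_on {0..L} g" using g_lipschitz by blast
  moreover have "{a..b} \<subseteq> {0..L}" using ab by auto
  ultimately have cont: "continuous_on {a..b} g"
    using lipschitz_on_continuous_on lipschitz_on_subset by blast
  obtain s where s: "s \<in> {a..b}" and max: "\<forall>t\<in>{a..b}. g t \<le> g s"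
    using continuous_attains_sup[OF compact_Icc _ cont] \<open>a < b\<close> by auto
  have g_ab: "\<bar>g t\<bar> \<le> 1" if "t \<in> {a..b}" for t using g_bounded that ab by auto
  have "g s \<noteq> 1" using none s by auto
  then have "g s < 1" using g_ab[OF s] by (simp add: abs_le_iff)
  have "-1 < g s"
  proof (rule ccontr)
    assume "\<not> - 1 < g s"
    have "\<forall>t\<in>{a..b}. g t = -1"
    proof
      fix t assume "t \<in> {a..b}"
      then have "\<bar>g t\<bar> \<le> 1" "g t \<le> g s" using g_ab max by auto
      with \<open>\<not> - 1 < g s\<close> show "g t = -1" by (simp add: abs_le_iff)
    qed
    then have "{a..b} \<subseteq> singular_set"
      by (rule const_g_imp_subset_singular_set[OF \<open>0 \<le> a\<close> \<open>a < b\<close> \<open>b \<le> L\<close> _ \<open>f a = 0\<close>])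
    moreover have "(a + b) / 2 \<in> {a..b} \<inter> {a<..<b}" using \<open>a < b\<close> by simp
    ultimately show False using gap by blast
  qed
  have "s \<noteq> a" "s \<noteq> b" using ga gb \<open>-1 < g s\<close> by auto
  then have "s \<in> {a<..<b}" using s by auto
  moreover have "s \<notin> singular_set" using gap \<open>s \<in> {a<..<b}\<close> by auto
  moreover have "\<bar>g s\<bar> < 1" using \<open>g s < 1\<close> \<open>-1 < g s\<close> by (simp add: abs_less_iff)
  ultimately show False using no_interior_max_off_singular_set \<open>{a..b} \<subseteq> {0..L}\<close> max by blast
qed

lemma gap_length:
  assumes lip: "C-lipschitz_on {0..L} g"
    and "a \<in> singular_set" and "b \<in> singular_set" and "a < b"
    and "{a<..<b} \<inter> singular_set = {}"
  shows "2 \<le> C * (b - a)"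
proof -
  obtain s where s: "s \<in> {a..b}" "g s = 1" using gap_attains_one[OF assms(2-)] by blast
  have "g a = -1" by (rule gap_left_end[OF assms(2-)])
  have ab: "a \<in> {0..L}" "s \<in> {0..L}" using assms(2,3) s(1) unfolding singular_set_def by auto
  have "2 = dist (g s) (g a)" using s(2) \<open>g a = -1\<close> by (simp add: dist_real_def)
  also have "\<dots> \<le> C * dist s a" using lipschitz_onD[OF lip ab(2,1)] .
  also have "\<dots> \<le> C * (b - a)"
    using s(1) lipschitz_on_nonneg[OF lip] by (intro mult_left_mono) (auto simp: dist_real_def)
  finally show ?thesis .
qed

theorem finite_components_complement_singular_set:
  "finite (components ({0..L} - singular_set))"
proof -
  obtain C where lip: "C-lipschitz_on {0..L} g" using g_lipschitz by blast
  have "0 \<le> C" using lipschitz_on_nonneg[OF lip] .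
  show ?thesis
  proof (rule finite_components_if_gaps_long[OF closed_singular_set])
    show "0 < 2 / (C + 1)" using \<open>0 \<le> C\<close> by simp
    fix a b assume "a \<in> singular_set" "b \<in> singular_set" "a < b" "{a<..<b} \<inter> singular_set = {}"
    then have "2 \<le> C * (b - a)" by (rule gap_length[OF lip])
    also have "\<dots> \<le> (C + 1) * (b - a)" using \<open>a < b\<close> by (intro mult_right_mono) auto
    finally show "2 / (C + 1) \<le> b - a"
      using pos_divide_le_eq[of "C + 1" 2 "b - a"] \<open>0 \<le> C\<close> by (simp add: mult.commute)
  qed
qed

end

lemma positive_lower_bound_if_inverse_bounded:
  fixes h :: "'a \<Rightarrow> real"
  assumes "\<forall>t\<in>S. h t > 0" and "\<exists>B. \<forall>t\<in>S. 1 / h t \<le> B" and "S \<noteq> {}"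
  shows "\<exists>\<beta>0>0. \<forall>t\<in>S. \<beta>0 \<le> h t"
proof -
  obtain B where B: "\<forall>t\<in>S. 1 / h t \<le> B" using assms(2) by blast
  obtain t0 where "t0 \<in> S" using assms(3) by blast
  then have "0 < 1 / h t0" "1 / h t0 \<le> B" using assms(1) B by auto
  then have "0 < B" by linarith
  have "1 / B \<le> h t" if "t \<in> S" for t
    using B assms(1) that \<open>0 < B\<close> by (simp add: field_simps)
  then show ?thesis using \<open>0 < B\<close> by (intro exI[of _ "1 / B"]) auto
qed

lemma reduced_curve_from_ode:
  fixes tau tau' u u' :: "real \<Rightarrow> 'a::real_inner" and lam :: 'a
  assumes "0 < L" and "0 < k"
    and beta_pos: "\<forall>t\<in>{0..L}. beta t > 0" and beta_bv: "bounded_variation_on beta 0 L"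
    and beta_inv_bdd: "\<exists>B. \<forall>t\<in>{0..L}. 1 / beta t \<le> B"
    and tau_lip: "\<exists>C. C-lipschitz_on {0..L} tau" and sphere: "\<forall>t\<in>{0..L}. norm (tau t) = 1"
    and tau_deriv: "AE t in lborel. t \<in> {0<..<L} \<longrightarrow> (tau has_vector_derivative tau' t) (at t)"
    and lam: "norm lam = 1"
    and u_lip: "\<exists>C. C-lipschitz_on {0..L} u"
    and u_deriv: "AE t in lborel. t \<in> {0<..<L} \<longrightarrow> (u has_vector_derivative u' t) (at t)"
    and ode1: "AE t in lborel. t \<in> {0<..<L} \<longrightarrow>
      u' t + (u t \<bullet> tau' t) *\<^sub>R tau t = beta t *\<^sub>R (lam - (lam \<bullet> tau t) *\<^sub>R tau t)"
    and ode2: "AE t in lborel. t \<in> {0<..<L} \<longrightarrow> norm (u t) *\<^sub>R tau' t = k *\<^sub>R u t"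
    and dep: "AE t in lborel. t \<in> {0<..<L} \<and> u t \<noteq> 0 \<longrightarrow> lin_dep3 (tau t) (tau' t) lam"
  shows "reduced_curve L k beta (\<lambda>t. lam \<bullet> tau t) (\<lambda>t. k * norm (u t)) (\<lambda>t. lam \<bullet> tau' t)
    (\<lambda>t. lam \<bullet> ((k / norm (u t)) *\<^sub>R u t))"
proof unfold_locales
  show "0 < L" "0 < k" by fact+
  show "\<exists>C. C-lipschitz_on {0..L} (\<lambda>t. lam \<bullet> tau t)"
    using tau_lip lipschitz_on_inner_unit[OF _ lam] by blast
  obtain Cu where Cu: "Cu-lipschitz_on {0..L} u" using u_lip by blast
  show "\<exists>C. C-lipschitz_on {0..L} (\<lambda>t. k * norm (u t))"
    using lipschitz_on_cmult_real[OF lipschitz_on_norm[OF Cu]] by blast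
  show "\<forall>t\<in>{0..L}. \<bar>lam \<bullet> tau t\<bar> \<le> 1"
  proof
    fix t assume "t \<in> {0..L}"
    then show "\<bar>lam \<bullet> tau t\<bar> \<le> 1" using Cauchy_Schwarz_ineq2[of lam "tau t"] lam sphere by simp
  qed
  show "\<forall>t\<in>{0..L}. 0 \<le> k * norm (u t)" using \<open>0 < k\<close> by simp
  show "\<exists>\<beta>0>0. \<forall>t\<in>{0..L}. \<beta>0 \<le> beta t"
    by (rule positive_lower_bound_if_inverse_bounded[OF beta_pos beta_inv_bdd]) (use \<open>0 < L\<close> in auto)
  show "bounded_variation_on beta 0 L" by fact
  show "AE t in lborel. t \<in> {0<..<L} \<longrightarrow>
    ((\<lambda>s. lam \<bullet> tau s) has_real_derivative lam \<bullet> tau' t) (at t)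
    \<and> ((\<lambda>s. k * norm (u s)) has_real_derivative beta t * (lam \<bullet> tau' t)) (at t)
    \<and> (lam \<bullet> tau' t)\<^sup>2 = k\<^sup>2 * (1 - (lam \<bullet> tau t)\<^sup>2)"
    by (rule AE_reduced_derivatives[OF \<open>0 < k\<close> beta_pos lam sphere tau_deriv u_deriv ode1 ode2 dep])
  show "isCont (\<lambda>t. lam \<bullet> ((k / norm (u t)) *\<^sub>R u t)) t"
    if "t \<in> {0<..<L}" and "0 < k * norm (u t)" for t
  proof -
    have "t \<in> interior {0..L}" using that(1) by simp
    then have "isCont u t"
      using continuous_on_interior lipschitz_on_continuous_on[OF Cu] by blast
    moreover have "u t \<noteq> 0" using that(2) by auto
    ultimately show ?thesis by (intro continuous_intros) auto
  qed
  show "AE t in lborel. t \<in> {0<..<L} \<and> 0 < k * norm (u t) \<longrightarrow>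
      lam \<bullet> tau' t = lam \<bullet> ((k / norm (u t)) *\<^sub>R u t)"
    using ode2
  proof (rule eventually_mono, intro impI)
    fix t assume "t \<in> {0<..<L} \<longrightarrow> norm (u t) *\<^sub>R tau' t = k *\<^sub>R u t"
      and t: "t \<in> {0<..<L} \<and> 0 < k * norm (u t)"
    then have eq: "norm (u t) *\<^sub>R tau' t = k *\<^sub>R u t" and "norm (u t) \<noteq> 0" by auto
    have "tau' t = (1 / norm (u t)) *\<^sub>R (norm (u t) *\<^sub>R tau' t)"
      using \<open>norm (u t) \<noteq> 0\<close> by simp
    also have "\<dots> = (k / norm (u t)) *\<^sub>R u t" unfolding eq by simp
    finally have "tau' t = (k / norm (u t)) *\<^sub>R u t" .
    then show "lam \<bullet> tau' t = lam \<bullet> ((k / norm (u t)) *\<^sub>R u t)" by simp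
  qed
qed

theorem mainTheorem18:
  fixes L k :: real and beta :: "real \<Rightarrow> real"
    and tau tau' u u' :: "real \<Rightarrow> real ^ 'n" and lam :: "real ^ 'n"
    and \<Omega> :: "real set"
  assumes n2: "CARD('n) \<ge> 2"
    and L: "L > 0"
    and beta_pos: "\<forall>t\<in>{0..L}. beta t > 0"
    and beta_bv: "bounded_variation_on beta 0 L"
    and beta_inv_bdd: "\<exists>B. \<forall>t\<in>{0..L}. 1 / beta t \<le> B"
    and tau_lip: "\<exists>C. C-lipschitz_on {0..L} tau"
    and tau_sphere: "\<forall>t\<in>{0..L}. norm (tau t) = 1"
    and tau_deriv: "AE t in lborel. t \<in> {0<..<L} \<longrightarrow> (tau has_vector_derivative tau' t) (at t)"
    and k_def: "esssup (restrict_space lborel {0<..<L}) (\<lambda>t. ereal (norm (tau' t))) = ereal k"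
    and k_pos: "k > 0"
    and lam: "norm lam = 1"
    and u_lip: "\<exists>C. C-lipschitz_on {0..L} u"
    and u_deriv: "AE t in lborel. t \<in> {0<..<L} \<longrightarrow> (u has_vector_derivative u' t) (at t)"
    and u_nonzero: "\<exists>t\<in>{0..L}. u t \<noteq> 0"
    and ode1: "AE t in lborel. t \<in> {0<..<L} \<longrightarrow>
        u' t + (u t \<bullet> tau' t) *\<^sub>R tau t = beta t *\<^sub>R (lam - (lam \<bullet> tau t) *\<^sub>R tau t)"
    and ode2: "AE t in lborel. t \<in> {0<..<L} \<longrightarrow> norm (u t) *\<^sub>R tau' t = k *\<^sub>R u t"
    and Omega_def: "\<Omega> = {t\<in>{0..L}. k * norm (u t) > 0}"
    and dep: "AE t in lborel. t \<in> \<Omega> \<longrightarrow> lin_dep3 (tau t) (tau' t) lam"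
  shows "finite (components ({t\<in>{0..L}. tau t \<noteq> lam \<and> tau t \<noteq> - lam} \<union> \<Omega>))"
proof -
  have \<Omega>: "\<Omega> = {t\<in>{0..L}. u t \<noteq> 0}" using k_pos unfolding Omega_def by auto
  have "AE t in lborel. t \<in> {0<..<L} \<and> u t \<noteq> 0 \<longrightarrow> lin_dep3 (tau t) (tau' t) lam"
    using dep by (rule eventually_mono) (auto simp: \<Omega>)
  then interpret reduced_curve L k beta "\<lambda>t. lam \<bullet> tau t" "\<lambda>t. k * norm (u t)"
    "\<lambda>t. lam \<bullet> tau' t" "\<lambda>t. lam \<bullet> ((k / norm (u t)) *\<^sub>R u t)"
    by (intro reduced_curve_from_ode[OF L k_pos beta_pos beta_bv beta_inv_bdd tau_lip tau_sphere
          tau_deriv lam u_lip u_deriv ode1 ode2])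
  have unit: "\<bar>lam \<bullet> tau t\<bar> = 1 \<longleftrightarrow> tau t = lam \<or> tau t = - lam" if "t \<in> {0..L}" for t
    using inner_eq_one_iff_unit[OF lam, of "tau t"] inner_eq_one_iff_unit[of "- lam" "tau t"]
      tau_sphere that lam by (auto simp: abs_eq_iff)
  have "{t\<in>{0..L}. tau t \<noteq> lam \<and> tau t \<noteq> - lam} \<union> \<Omega> = {0..L} - singular_set"
  proof (rule set_eqI)
    fix t
    show "t \<in> {t\<in>{0..L}. tau t \<noteq> lam \<and> tau t \<noteq> - lam} \<union> \<Omega> \<longleftrightarrow> t \<in> {0..L} - singular_set"
      by (cases "t \<in> {0..L}") (use k_pos in \<open>auto simp: singular_set_def \<Omega> unit\<close>)
  qed
  then show ?thesis using finite_components_complement_singular_set by simp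
qed

end
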